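(* Let $0<\alpha<1$, $T>0$, $\gamma\ge1$, $N\ge2$, and consider the graded mesh $t_k=T(k/N)^{\gamma}$, $0\le k\le N$. Let the coefficients $a^{(n)}_{n-k}$, DCC kernels $p^{(n)}_{n-k}$ and consistency errors $R^n$ be as in the context for this mesh. Let $v\in C([0,T])\cap C^2((0,T])$ satisfy $|v''(t)|\le c_v(1+t^{\sigma-2})$ for $0<t\le T$, with constants $c_v>0$ and $\sigma\in(0,1)\cup(1,2)$. Then there is a constant $C>0$ depending only on $c_v,\sigma,T,\gamma,\alpha$ (and not on $N$ or $n$) such that for all $1\le n\le N$, $$\sum_{j=1}^n p^{(n)}_{n-j}|R^j|\le C\,N^{-\min\{\gamma\sigma,\;2-\alpha\}} .$$
   Context: For a mesh $0=t_0<t_1<\dots<t_N=T$ let $\tau_n=t_n-t_{n-1}$, $t_{-1/2}=t_0$, $t_{n-1/2}=t_{n-1}+\tau_n/2$ for $1\le n\le N$, $\tau_{1/2}=\tau_1/2$ and $\tau_{n-1/2}=(\tau_n+\tau_{n-1})/2$ for $n\ge 2$. Let $\omega_\gamma(t)=t^{\gamma-1}/\Gamma(\gamma)$ for $t>0$ (here the subscript is a generic parameter). For $1\le n\le N$ and $1\le k\le n$ define $$a^{(n)}_{n-k}=\frac{1}{\tau_{k-1/2}}\int_{t_{k-3/2}}^{t_{k-1/2}}\omega_{1-\alpha}(t_{n-1/2}-s)\,ds .$$ The discrete complementary convolution (DCC) kernels are defined by $p^{(n)}_0=1/a^{(n)}_0$ and $p^{(n)}_{n-k}=\frac{1}{a^{(k)}_0}\sum_{j=k+1}^n\big(a^{(j)}_{j-k-1}-a^{(j)}_{j-k}\big)p^{(n)}_{n-j}$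 for $1\le k\le n-1$; equivalently $\sum_{j=k}^n p^{(n)}_{n-j}a^{(j)}_{j-k}=1$ for all $1\le k\le n$. The Caputo derivative of order $\alpha$ is ${}^C_0D^\alpha_t v(t)=\int_0^t\omega_{1-\alpha}(t-s)v'(s)\,ds$, and $$R^n={}^C_0D^\alpha_t v(t_{n-1/2})-\sum_{k=1}^n a^{(n)}_{n-k}\big(v(t_{k-1/2})-v(t_{k-3/2})\big),\qquad 1\le n\le N.$$ (In the paper $\alpha=\beta-1$ with $1<\beta<2$, so $2-\alpha=3-\beta$.) *)

theory Defs
  imports "HOL-Analysis.Analysis"
begin

definition omega :: "real \<Rightarrow> real \<Rightarrow> real" where
  "omega g t = (if t > 0 then t powr (g - 1) / Gamma g else 0)"

text \<open>Mesh t :: nat \<Rightarrow> real with t 0 = 0 < t 1 < ... < t N = T.\<close>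
definition tau :: "(nat \<Rightarrow> real) \<Rightarrow> nat \<Rightarrow> real" where
  "tau t n = t n - t (n - 1)"

text \<open>thalf t n = t_{n-1/2}; thalf t 0 = t_{-1/2} = t_0.\<close>
definition thalf :: "(nat \<Rightarrow> real) \<Rightarrow> nat \<Rightarrow> real" where
  "thalf t n = (if n = 0 then t 0 else t (n - 1) + tau t n / 2)"

text \<open>tauhalf t n = tau_{n-1/2} (n \<ge> 1).\<close>
definition tauhalf :: "(nat \<Rightarrow> real) \<Rightarrow> nat \<Rightarrow> real" where
  "tauhalf t n = (if n \<le> 1 then tau t 1 / 2 else (tau t n + tau t (n - 1)) / 2)"

text \<open>acoef al t n k = a^{(n)}_{n-k}.\<close>
definition acoef :: "real \<Rightarrow> (nat \<Rightarrow> real) \<Rightarrow> nat \<Rightarrow> nat \<Rightarrow> real" where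
  "acoef al t n k = (1 / tauhalf t k) *
     integral {thalf t (k - 1) .. thalf t k} (\<lambda>s. omega (1 - al) (thalf t n - s))"

text \<open>pker al t n k = p^{(n)}_{n-k} (DCC kernels), defined by the recursion of the paper.\<close>
function pker :: "real \<Rightarrow> (nat \<Rightarrow> real) \<Rightarrow> nat \<Rightarrow> nat \<Rightarrow> real" where
  "pker al t n k =
     (if n \<le> k then 1 / acoef al t n n
      else (1 / acoef al t k k) *
        (\<Sum>j\<in>{k+1..n}. (acoef al t j (k + 1) - acoef al t j k) * pker al t n j))"
  by pat_completeness auto
termination
  by (relation "Wellfounded.measure (\<lambda>(al, t, n, k). n - k)") auto

definition caputo :: "real \<Rightarrow> (real \<Rightarrow> real) \<Rightarrow> real \<Rightarrow> real" where
  "caputo al v x = integral {0..x} (\<lambda>s. omega (1 - al) (x - s) * deriv v s)"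

definition Rerr :: "real \<Rightarrow> (nat \<Rightarrow> real) \<Rightarrow> (real \<Rightarrow> real) \<Rightarrow> nat \<Rightarrow> real" where
  "Rerr al t v n = caputo al v (thalf t n)
     - (\<Sum>k=1..n. acoef al t n k * (v (thalf t k) - v (thalf t (k - 1))))"

definition graded_mesh :: "real \<Rightarrow> real \<Rightarrow> nat \<Rightarrow> nat \<Rightarrow> real" where
  "graded_mesh T g N k = T * (real k / real N) powr g"

end

theory Submission
  imports Defs
begin

text \<open>
  On each cell \<open>[t(k-3/2), t(k-1/2)]\<close> the scheme replaces \<open>v'\<close> by its mean slope, so \<open>R(n)\<close> is a
  sum of cell errors. The deviation of \<open>v'\<close> from its value at the right endpoint is controlled by
  the antiderivatives \<open>Phi'\<close>, \<open>Phi\<close> of the majorant \<open>cv (1 + t\<^sup>\<sigma>\<^sup>-\<^sup>2)\<close> of \<open>|v''|\<close>. This bounds the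
  error of an interior cell by \<open>2 (K b - K a) Q(k)\<close>, with \<open>K\<close> the kernel and \<open>Q(k)\<close> a local size
  of \<open>v\<close>, and that of the last cell by \<open>3 a(n,n) Q(n)\<close>. The kernel differences are dominated by
  differences of the coefficients, which telescope against the DCC kernels since
  \<open>\<Sum>j. p(n,j) a(j,k) = 1\<close>; with \<open>\<Sum>j. p(n,j) \<omega>(t(j-1/2)) \<le> 1\<close> the theorem reduces to the
  local estimates \<open>a(k,k) Q(k) \<le> B \<omega>(t(k-1/2))\<close> and \<open>a(k-1,k-1) Q(k) \<le> B \<omega>(t(k-3/2))\<close>. On the
  graded mesh \<open>\<tau>(k) \<approx> T \<gamma> (k/N)\<^sup>\<gamma>\<^sup>-\<^sup>1 / N\<close> and \<open>t(k) \<approx> T (k/N)\<^sup>\<gamma>\<close>, which gives both with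
  \<open>B = C N\<^sup>-\<^sup>r\<close>, \<open>r = min (\<gamma> \<sigma>) (2 - \<alpha>)\<close>.
\<close>

section \<open>The kernels\<close>

lemma Gamma_two_minus: "(al::real) < 1 \<Longrightarrow> Gamma (2 - al) = (1 - al) * Gamma (1 - al)"
proof -
  assume "al < 1"
  then have "1 - al \<notin> \<int>\<^sub>\<le>\<^sub>0" by (auto elim!: nonpos_Ints_cases)
  then show ?thesis using Gamma_plus1[of "1 - al"] by (simp add: algebra_simps)
qed

lemma Gamma_one_minus_pos: "(al::real) < 1 \<Longrightarrow> Gamma (1 - al) > 0"
  by (intro Gamma_real_pos) simp

lemma Gamma_two_minus_pos: "(al::real) < 1 \<Longrightarrow> Gamma (2 - al) > 0"
  by (intro Gamma_real_pos) simp

lemma omega_pos: "al < 1 \<Longrightarrow> x > 0 \<Longrightarrow> omega (1 - al) x > 0"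
  using Gamma_one_minus_pos[of al] by (simp add: omega_def)

lemma omega_nonneg: "al < 1 \<Longrightarrow> omega (1 - al) x \<ge> 0"
  using Gamma_one_minus_pos[of al] by (simp add: omega_def)

lemma omega_antimono:
  "0 < al \<Longrightarrow> al < 1 \<Longrightarrow> 0 < x \<Longrightarrow> x \<le> y \<Longrightarrow> omega (1 - al) y \<le> omega (1 - al) x"
  using Gamma_one_minus_pos[of al] by (auto simp: omega_def intro!: divide_right_mono powr_mono2')

lemma omega_half_le:
  assumes "0 < al" "al < 1" "h > 0"
  shows "omega (1 - al) (h / 2) \<le> 2 * (h powr (- al) / Gamma (2 - al))"
proof -
  have G: "Gamma (2 - al) = (1 - al) * Gamma (1 - al)" "Gamma (1 - al) > 0"
    using Gamma_two_minus Gamma_one_minus_pos assms by auto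
  have "omega (1 - al) (h / 2) = 2 powr al * h powr (- al) / Gamma (1 - al)"
    using assms by (simp add: omega_def powr_divide powr_minus divide_simps)
  also have "\<dots> \<le> 2 * h powr (- al) / Gamma (1 - al)"
    using powr_mono[of al 1 2] assms G by (intro divide_right_mono mult_right_mono) auto
  also have "\<dots> \<le> 2 * (h powr (- al) / Gamma (2 - al))"
    using assms G by (simp add: divide_simps)
  finally show ?thesis .
qed

lemma divide_Gamma_le_omega:
  assumes "0 < al" "al < 1" "y > 0" "A * y powr al \<le> (1 - al) * M"
  shows "A / Gamma (2 - al) \<le> M * omega (1 - al) y"
proof -
  have G: "Gamma (2 - al) = (1 - al) * Gamma (1 - al)" "Gamma (1 - al) > 0"
    using Gamma_two_minus Gamma_one_minus_pos assms by auto
  have "A = A * y powr al * y powr (- al)"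
    using \<open>y > 0\<close> by (simp add: powr_minus)
  also have "\<dots> \<le> (1 - al) * M * y powr (- al)"
    using assms(4) by (rule mult_right_mono) simp
  finally have "A / ((1 - al) * Gamma (1 - al))
      \<le> (1 - al) * (M * y powr (- al)) / ((1 - al) * Gamma (1 - al))"
    using G assms by (intro divide_right_mono) (auto simp: mult.assoc)
  also have "\<dots> = M * omega (1 - al) y"
    using assms by (simp add: omega_def)
  finally show ?thesis
    using G by simp
qed

text \<open>The kernel \<open>\<omega>\<^sub>2\<^sub>-\<^sub>\<alpha>\<close>, continuous at \<open>0\<close>; its derivative is \<open>\<omega>\<^sub>1\<^sub>-\<^sub>\<alpha>\<close>.\<close>

definition omega_primitive :: "real \<Rightarrow> real \<Rightarrow> real" where
  "omega_primitive al x = x powr (1 - al) / Gamma (2 - al)"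

lemma omega_primitive_has_real_derivative:
  assumes "0 < al" "al < 1" "x > 0"
  shows "(omega_primitive al has_real_derivative omega (1 - al) x) (at x)"
proof -
  have "((\<lambda>x. x powr (1 - al) / Gamma (2 - al)) has_real_derivative
          (1 - al) * x powr (1 - al - 1) / Gamma (2 - al)) (at x)"
    using assms by (intro DERIV_cdivide has_real_derivative_powr) auto
  moreover have "(1 - al) * x powr (1 - al - 1) / Gamma (2 - al) = omega (1 - al) x"
    using Gamma_two_minus[of al] Gamma_one_minus_pos[of al] assms by (simp add: omega_def)
  ultimately show ?thesis
    unfolding omega_primitive_def by simp
qed

lemma continuous_on_omega_primitive: "al < 1 \<Longrightarrow> continuous_on {0..} (omega_primitive al)"
  unfolding omega_primitive_def
  by (intro continuous_intros continuous_on_powr')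
     (auto simp: Gamma_two_minus_pos[THEN less_imp_neq, symmetric])

lemma omega_shift_has_integral:
  assumes "0 < al" "al < 1" "a \<le> b" "b \<le> x"
  shows "((\<lambda>s. omega (1 - al) (x - s)) has_integral
           (omega_primitive al (x - a) - omega_primitive al (x - b))) {a..b}"
proof -
  have "continuous_on {a..b} (\<lambda>s. - omega_primitive al (x - s))"
    using assms
    by (intro continuous_intros continuous_on_compose2[OF continuous_on_omega_primitive])
       (auto intro!: continuous_intros)
  then have "((\<lambda>s. omega (1 - al) (x - s)) has_integral
               (- omega_primitive al (x - b) - - omega_primitive al (x - a))) {a..b}"
  proof (rule fundamental_theorem_of_calculus_interior[OF \<open>a \<le> b\<close>])
    fix s assume "s \<in> {a<..<b}"
    then have "((\<lambda>s. - omega_primitive al (x - s)) has_real_derivative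
                 - (omega (1 - al) (x - s) * (0 - 1))) (at s)"
      using assms
      by (intro DERIV_minus DERIV_chain2[OF omega_primitive_has_real_derivative])
         (auto intro!: derivative_eq_intros)
    then show "((\<lambda>s. - omega_primitive al (x - s)) has_vector_derivative omega (1 - al) (x - s)) (at s)"
      by (simp add: has_real_derivative_iff_has_vector_derivative)
  qed
  then show ?thesis by simp
qed

section \<open>Majorants for the solution\<close>

text \<open>Two antiderivatives of the bound \<open>cv (1 + u\<^sup>\<sigma>\<^sup>-\<^sup>2)\<close> on \<open>|v''|\<close>;
  \<open>\<sigma> \<noteq> 1\<close> keeps them free of logarithms.\<close>

definition Phi'' :: "real \<Rightarrow> real \<Rightarrow> real \<Rightarrow> real" where
  "Phi'' cv sg u = cv * (1 + u powr (sg - 2))"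

definition Phi' :: "real \<Rightarrow> real \<Rightarrow> real \<Rightarrow> real" where
  "Phi' cv sg u = cv * (u + u powr (sg - 1) / (sg - 1))"

definition Phi :: "real \<Rightarrow> real \<Rightarrow> real \<Rightarrow> real" where
  "Phi cv sg u = cv * (u\<^sup>2 / 2 + u powr sg / (sg * (sg - 1)))"

lemma Phi_has_real_derivative:
  "sg \<noteq> 0 \<Longrightarrow> sg \<noteq> 1 \<Longrightarrow> u > 0 \<Longrightarrow> (Phi cv sg has_real_derivative Phi' cv sg u) (at u)"
  unfolding Phi_def Phi'_def
  by (rule derivative_eq_intros refl has_real_derivative_powr | simp)+

lemma Phi'_has_real_derivative:
  "sg \<noteq> 1 \<Longrightarrow> u > 0 \<Longrightarrow> (Phi' cv sg has_real_derivative Phi'' cv sg u) (at u)"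
  unfolding Phi''_def Phi'_def
  by (rule derivative_eq_intros refl has_real_derivative_powr | simp)+

lemma continuous_on_Phi: "sg > 0 \<Longrightarrow> sg \<noteq> 1 \<Longrightarrow> continuous_on {0..} (Phi cv sg)"
  unfolding Phi_def
  by (intro continuous_intros continuous_on_powr'[OF continuous_on_id continuous_on_const]) auto

lemma continuous_on_Phi': "sg \<noteq> 1 \<Longrightarrow> continuous_on {0<..} (Phi' cv sg)"
  by (rule DERIV_continuous_on[where D = "Phi'' cv sg"])
     (auto intro: has_field_derivative_at_within Phi'_has_real_derivative)

lemma Phi''_pos: "cv > 0 \<Longrightarrow> Phi'' cv sg u > 0"
  unfolding Phi''_def by (simp add: add_pos_nonneg)

lemma Phi''_antimono:
  "cv > 0 \<Longrightarrow> sg < 2 \<Longrightarrow> 0 < u \<Longrightarrow> u \<le> w \<Longrightarrow> Phi'' cv sg w \<le> Phi'' cv sg u"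
  unfolding Phi''_def by (auto intro!: mult_left_mono powr_mono2')

lemma Phi'_mono:
  assumes "cv > 0" "sg \<noteq> 1" "0 < s" "s \<le> b"
  shows "Phi' cv sg s \<le> Phi' cv sg b"
proof (rule DERIV_nonneg_imp_increasing_open[OF \<open>s \<le> b\<close>])
  fix u assume "s < u"
  then show "\<exists>y. (Phi' cv sg has_real_derivative y) (at u) \<and> 0 \<le> y"
    using assms Phi'_has_real_derivative[of sg u cv] Phi''_pos[of cv sg u]
    by (intro exI[of _ "Phi'' cv sg u"]) auto
next
  show "continuous_on {s..b} (Phi' cv sg)"
    by (rule continuous_on_subset[OF continuous_on_Phi']) (use assms in auto)
qed

lemma Phi'_increment_le:
  assumes "cv > 0" "sg < 2" "sg \<noteq> 1" "0 < m" "m \<le> s" "s \<le> b"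
  shows "Phi' cv sg b - Phi' cv sg s \<le> Phi'' cv sg m * (b - s)"
proof (cases "s = b")
  case False
  then have "s < b" "\<forall>u. s \<le> u \<and> u \<le> b \<longrightarrow> DERIV (Phi' cv sg) u :> Phi'' cv sg u"
    using assms by (auto intro: Phi'_has_real_derivative)
  then obtain z where z: "s < z" "z < b" "Phi' cv sg b - Phi' cv sg s = (b - s) * Phi'' cv sg z"
    using MVT2[of s b "Phi' cv sg" "Phi'' cv sg"] by blast
  have "Phi'' cv sg z \<le> Phi'' cv sg m"
    using Phi''_antimono[of cv sg m z] assms z by simp
  then show ?thesis
    using z assms by (simp add: mult.commute mult_left_mono)
qed simp

definition Phi_gap :: "real \<Rightarrow> real \<Rightarrow> real \<Rightarrow> real \<Rightarrow> real" where
  "Phi_gap cv sg a b = (b - a) * Phi' cv sg b - Phi cv sg b + Phi cv sg a"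

lemma Phi_gap_has_integral:
  assumes "0 < sg" "sg \<noteq> 1" "0 \<le> a" "a \<le> b"
  shows "((\<lambda>s. Phi' cv sg b - Phi' cv sg s) has_integral Phi_gap cv sg a b) {a..b}"
proof -
  have "(Phi' cv sg has_integral (Phi cv sg b - Phi cv sg a)) {a..b}"
  proof (rule fundamental_theorem_of_calculus_interior[OF \<open>a \<le> b\<close>])
    show "continuous_on {a..b} (Phi cv sg)"
      using assms by (auto intro: continuous_on_subset[OF continuous_on_Phi])
    fix s assume "s \<in> {a<..<b}"
    then show "(Phi cv sg has_vector_derivative Phi' cv sg s) (at s)"
      using Phi_has_real_derivative[of sg s cv] assms
      by (simp add: has_real_derivative_iff_has_vector_derivative)
  qed
  from has_integral_diff[OF has_integral_const_real[of "Phi' cv sg b" a b] this]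
  show ?thesis
    using assms by (simp add: Phi_gap_def algebra_simps)
qed

lemma has_integral_abs_le_on_Ioo:
  fixes f g :: "real \<Rightarrow> real"
  assumes "(f has_integral I) {a..b}" "(g has_integral J) {a..b}" "\<And>s. s \<in> {a<..<b} \<Longrightarrow> \<bar>f s\<bar> \<le> g s"
  shows "\<bar>I\<bar> \<le> J"
proof -
  have Ioo: "(f has_integral I) {a<..<b}" "(g has_integral J) {a<..<b}"
    using assms(1,2) by (simp_all add: has_integral_Icc_iff_Ioo)
  then have "norm (integral {a<..<b} f) \<le> integral {a<..<b} g"
    using assms(3) by (intro integral_norm_bound_integral) auto
  then show ?thesis
    using Ioo by (simp add: integral_unique)
qed

lemma integrable_on_Icc_if_continuous_on_Ioo_bounded:
  fixes f g :: "real \<Rightarrow> real"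
  assumes "continuous_on {a<..<b} f" "g integrable_on {a..b}" "\<And>s. s \<in> {a<..<b} \<Longrightarrow> \<bar>f s\<bar> \<le> g s"
  shows "f integrable_on {a..b}"
proof -
  have Ioo: "{a<..<b} \<in> sets lebesgue"
    by (metis borel_open open_greaterThanLessThan sets_completionI_sets sets_lborel)
  have "f integrable_on {a<..<b}"
    using assms(2) Ioo
    by (intro measurable_bounded_by_integrable_imp_integrable_real
          [OF continuous_imp_measurable_on_sets_lebesgue[OF assms(1) Ioo] _ assms(3)])
       (simp_all add: integrable_on_Icc_iff_Ioo)
  then show ?thesis
    by (simp add: integrable_on_Icc_iff_Ioo)
qed

lemma Phi_gap_nonneg:
  assumes "cv > 0" "0 < sg" "sg \<noteq> 1" "0 \<le> a" "a \<le> b"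
  shows "0 \<le> Phi_gap cv sg a b"
proof -
  have "\<bar>0\<bar> \<le> Phi_gap cv sg a b"
    by (rule has_integral_abs_le_on_Ioo[OF has_integral_0 Phi_gap_has_integral])
       (use assms Phi'_mono in auto)
  then show ?thesis by simp
qed

lemma Phi_gap_le:
  assumes cv: "0 < cv" and sg: "0 < sg" "sg < 2" "sg \<noteq> 1" and ab: "0 < a" "a < b"
  shows "Phi_gap cv sg a b \<le> Phi'' cv sg a * (b - a)\<^sup>2"
proof -
  have "\<forall>u. a \<le> u \<and> u \<le> b \<longrightarrow> DERIV (Phi cv sg) u :> Phi' cv sg u"
    using ab sg by (auto intro: Phi_has_real_derivative)
  then obtain z where z: "a < z" "z < b" "Phi cv sg b - Phi cv sg a = (b - a) * Phi' cv sg z"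
    using MVT2[OF ab(2)] by blast
  have "Phi' cv sg b - Phi' cv sg z \<le> Phi'' cv sg a * (b - z)"
    using z ab by (intro Phi'_increment_le[OF cv sg(2,3)]) auto
  also have "\<dots> \<le> Phi'' cv sg a * (b - a)"
    using z Phi''_pos[OF cv, of sg a] by (intro mult_left_mono) auto
  finally have "(b - a) * (Phi' cv sg b - Phi' cv sg z) \<le> (b - a) * (Phi'' cv sg a * (b - a))"
    using ab by (intro mult_left_mono) auto
  then show ?thesis
    using z(3) by (simp add: Phi_gap_def power2_eq_square algebra_simps)
qed

lemma Phi_gap_0:
  assumes "0 < sg" "sg \<noteq> 1" "0 < h"
  shows "Phi_gap cv sg 0 h = cv * (h\<^sup>2 / 2 + h powr sg / sg)"
proof -
  have "1 / (sg - 1) = sg / (sg * (sg - 1))"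
    using assms by simp
  then have "1 / (sg - 1) - 1 / (sg * (sg - 1)) = (sg - 1) / (sg * (sg - 1))"
    by (simp add: diff_divide_distrib)
  then have key: "1 / (sg - 1) - 1 / (sg * (sg - 1)) = 1 / sg"
    using assms by simp
  have "h powr sg / (sg - 1) - h powr sg / (sg * (sg - 1)) = h powr sg / sg"
    using key by (metis (no_types, lifting) right_diff_distrib times_divide_eq_right mult.right_neutral)
  moreover have "h * h powr (sg - 1) = h powr sg"
    using assms by (simp add: powr_diff)
  then have "h * Phi' cv sg h = cv * (h * h + h powr sg / (sg - 1))"
    unfolding Phi'_def by (simp add: algebra_simps)
  ultimately show ?thesis
    using assms by (simp add: Phi_gap_def Phi_def power2_eq_square algebra_simps)
qed

lemma abs_increment_le_increment:
  fixes f g f' g' :: "real \<Rightarrow> real"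
  assumes "s \<le> b" "continuous_on {s..b} f" "continuous_on {s..b} g"
    and "\<And>u. s < u \<Longrightarrow> u < b \<Longrightarrow> (f has_real_derivative f' u) (at u)"
    and "\<And>u. s < u \<Longrightarrow> u < b \<Longrightarrow> (g has_real_derivative g' u) (at u)"
    and "\<And>u. s < u \<Longrightarrow> u < b \<Longrightarrow> \<bar>f' u\<bar> \<le> g' u"
  shows "\<bar>f b - f s\<bar> \<le> g b - g s"
proof -
  have "(\<lambda>u. g u + f u) s \<le> (\<lambda>u. g u + f u) b"
  proof (rule DERIV_nonneg_imp_increasing_open[OF \<open>s \<le> b\<close>])
    fix u assume "s < u" "u < b"
    then show "\<exists>y. ((\<lambda>u. g u + f u) has_real_derivative y) (at u) \<and> 0 \<le> y"
      using assms(4-6) by (intro exI[of _ "g' u + f' u"]) (force intro: DERIV_add)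
  qed (intro continuous_intros assms(2,3))
  moreover have "(\<lambda>u. g u - f u) s \<le> (\<lambda>u. g u - f u) b"
  proof (rule DERIV_nonneg_imp_increasing_open[OF \<open>s \<le> b\<close>])
    fix u assume "s < u" "u < b"
    then show "\<exists>y. ((\<lambda>u. g u - f u) has_real_derivative y) (at u) \<and> 0 \<le> y"
      using assms(4-6) by (intro exI[of _ "g' u - f' u"]) (force intro: DERIV_diff)
  qed (intro continuous_intros assms(2,3))
  ultimately show ?thesis by simp
qed

definition admissible ::
    "real \<Rightarrow> real \<Rightarrow> real \<Rightarrow> (real \<Rightarrow> real) \<Rightarrow> (real \<Rightarrow> real) \<Rightarrow> (real \<Rightarrow> real) \<Rightarrow> bool" where
  "admissible T cv sg v v' v'' \<longleftrightarrow> continuous_on {0..T} v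
     \<and> (\<forall>t\<in>{0<..T}. (v has_real_derivative v' t) (at t within {0<..T})
                    \<and> (v' has_real_derivative v'' t) (at t within {0<..T}))
     \<and> continuous_on {0<..T} v''
     \<and> (\<forall>t\<in>{0<..T}. \<bar>v'' t\<bar> \<le> cv * (1 + t powr (sg - 2)))"

lemma admissible_has_real_derivative:
  assumes "admissible T cv sg v v' v''" "0 < u" "u < T"
  shows "(v has_real_derivative v' u) (at u)" "(v' has_real_derivative v'' u) (at u)"
proof -
  have at: "at u within {0<..<T} = at u"
    using assms by (intro at_within_open) auto
  have "(v has_real_derivative v' u) (at u within {0<..T})"
    "(v' has_real_derivative v'' u) (at u within {0<..T})"
    using assms unfolding admissible_def by auto
  then show "(v has_real_derivative v' u) (at u)" "(v' has_real_derivative v'' u) (at u)"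
    using has_field_derivative_subset[of _ _ u "{0<..T}" "{0<..<T}"] unfolding at by force+
qed

lemma continuous_on_admissible_derivative:
  "admissible T cv sg v v' v'' \<Longrightarrow> continuous_on {0<..T} v'"
  unfolding admissible_def by (intro DERIV_continuous_on[where D = v'']) auto

lemma admissible_derivative_increment:
  assumes "admissible T cv sg v v' v''" "cv > 0" "sg \<noteq> 1" "0 < s" "s \<le> b" "b < T"
  shows "\<bar>v' b - v' s\<bar> \<le> Phi' cv sg b - Phi' cv sg s"
proof (rule abs_increment_le_increment[OF \<open>s \<le> b\<close>])
  show "continuous_on {s..b} v'"
    using assms by (auto intro: continuous_on_subset[OF continuous_on_admissible_derivative])
  show "continuous_on {s..b} (Phi' cv sg)"
    using assms by (auto intro: continuous_on_subset[OF continuous_on_Phi'])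
  fix u assume "s < u" "u < b"
  with assms show "(v' has_real_derivative v'' u) (at u)"
    by (intro admissible_has_real_derivative(2)[OF assms(1)]) auto
  from \<open>s < u\<close> assms show "(Phi' cv sg has_real_derivative Phi'' cv sg u) (at u)"
    by (intro Phi'_has_real_derivative) auto
  from \<open>s < u\<close> \<open>u < b\<close> assms show "\<bar>v'' u\<bar> \<le> Phi'' cv sg u"
    unfolding admissible_def Phi''_def by auto
qed

section \<open>A single cell\<close>

definition cell_error ::
    "real \<Rightarrow> (real \<Rightarrow> real) \<Rightarrow> (real \<Rightarrow> real) \<Rightarrow> real \<Rightarrow> real \<Rightarrow> real \<Rightarrow> real" where
  "cell_error al v v' x a b = integral {a..b} (\<lambda>s. omega (1 - al) (x - s) * v' s)
     - (v b - v a) / (b - a) * (omega_primitive al (x - a) - omega_primitive al (x - b))"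

context
  fixes al sg cv T x a b :: real and v v' v'' :: "real \<Rightarrow> real"
  assumes al: "0 < al" "al < 1" and sg: "0 < sg" "sg < 2" "sg \<noteq> 1" and cv: "0 < cv"
    and adm: "admissible T cv sg v v' v''"
    and cell: "0 \<le> a" "a < b" "b \<le> x" "x < T"
begin

lemma cell_kernel_has_integral:
  "((\<lambda>s. omega (1 - al) (x - s)) has_integral
      (omega_primitive al (x - a) - omega_primitive al (x - b))) {a..b}"
  using al cell by (intro omega_shift_has_integral) auto

lemma cell_kernel_integral_nonneg:
  "0 \<le> omega_primitive al (x - a) - omega_primitive al (x - b)"
  using has_integral_nonneg[OF cell_kernel_has_integral] omega_nonneg[OF al(2)] by auto

lemma cell_kernel_mono: "s \<le> s' \<Longrightarrow> s' < x \<Longrightarrow> omega (1 - al) (x - s) \<le> omega (1 - al) (x - s')"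
  using omega_antimono[OF al, of "x - s'" "x - s"] by simp

lemma cell_derivative_deviation:
  "s \<in> {a<..<b} \<Longrightarrow> \<bar>v' s - v' b\<bar> \<le> Phi' cv sg b - Phi' cv sg s"
  using admissible_derivative_increment[OF adm cv sg(3), of s b] cell by auto

lemma cell_derivative_deviation_has_integral:
  "((\<lambda>s. v' s - v' b) has_integral ((v b - v a) / (b - a) - v' b) * (b - a)) {a..b}"
proof -
  have "(v' has_integral (v b - v a)) {a..b}"
  proof (rule fundamental_theorem_of_calculus_interior)
    show "continuous_on {a..b} v"
      using adm cell unfolding admissible_def by (auto intro: continuous_on_subset)
    fix s assume "s \<in> {a<..<b}"
    then show "(v has_vector_derivative v' s) (at s)"
      using admissible_has_real_derivative(1)[OF adm, of s] cell
      by (simp add: has_real_derivative_iff_has_vector_derivative)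
  qed (use cell in auto)
  from has_integral_diff[OF this has_integral_const_real[of "v' b" a b]]
  have "((\<lambda>s. v' s - v' b) has_integral (v b - v a) - (b - a) * v' b) {a..b}"
    using cell by simp
  moreover have "(v b - v a) - (b - a) * v' b = ((v b - v a) / (b - a) - v' b) * (b - a)"
    using cell by (simp add: field_simps)
  ultimately show ?thesis
    by simp
qed

lemma cell_slope_deviation:
  "\<bar>(v b - v a) / (b - a) - v' b\<bar> * (b - a) \<le> Phi_gap cv sg a b"
  using has_integral_abs_le_on_Ioo[OF cell_derivative_deviation_has_integral
      Phi_gap_has_integral[OF sg(1,3)] cell_derivative_deviation] cell
  by (simp add: abs_mult)

text \<open>Splitting at the midpoint \<open>m\<close>: left of \<open>m\<close> the kernel is at most its value at \<open>m\<close>,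
  right of \<open>m\<close> the increment of \<open>Phi'\<close> is at most \<open>Phi'' m (b - a)\<close>.\<close>

lemma cell_kernel_deviation_bound:
  assumes "s \<in> {a<..<b}"
  defines "m \<equiv> (a + b) / 2"
  shows "\<bar>omega (1 - al) (x - s) * (v' s - v' b)\<bar>
    \<le> omega (1 - al) (x - m) * (Phi' cv sg b - Phi' cv sg s) + Phi'' cv sg m * (b - a) * omega (1 - al) (x - s)"
proof -
  have dev: "\<bar>v' s - v' b\<bar> \<le> Phi' cv sg b - Phi' cv sg s"
    using cell_derivative_deviation[OF assms(1)] .
  have K: "0 \<le> omega (1 - al) (x - s)" "0 \<le> omega (1 - al) (x - m)"
    using omega_nonneg[OF al(2)] by auto
  have "0 \<le> Phi'' cv sg m * (b - a)"
    using Phi''_pos[OF cv, of sg m] cell by simp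
  then have right: "0 \<le> Phi'' cv sg m * (b - a) * omega (1 - al) (x - s)"
    using K by simp
  show ?thesis
  proof (cases "s \<le> m")
    case True
    then have "omega (1 - al) (x - s) \<le> omega (1 - al) (x - m)"
      using cell_kernel_mono[of s m] cell unfolding m_def by auto
    then have "\<bar>omega (1 - al) (x - s) * (v' s - v' b)\<bar> \<le> omega (1 - al) (x - m) * (Phi' cv sg b - Phi' cv sg s)"
      using dev K by (simp add: abs_mult mult_mono)
    then show ?thesis
      using right by linarith
  next
    case False
    have "\<bar>v' s - v' b\<bar> \<le> Phi'' cv sg m * (b - s)"
      using dev Phi'_increment_le[OF cv sg(2,3), of m s b] False assms cell by (auto simp: m_def)
    also have "\<dots> \<le> Phi'' cv sg m * (b - a)"
      using Phi''_pos[OF cv, of sg m] assms by (auto intro!: mult_left_mono)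
    finally have "omega (1 - al) (x - s) * \<bar>v' s - v' b\<bar> \<le> omega (1 - al) (x - s) * (Phi'' cv sg m * (b - a))"
      using K(1) by (rule mult_left_mono)
    then have "\<bar>omega (1 - al) (x - s) * (v' s - v' b)\<bar> \<le> Phi'' cv sg m * (b - a) * omega (1 - al) (x - s)"
      using K by (simp add: abs_mult mult.commute)
    moreover have "0 \<le> omega (1 - al) (x - m) * (Phi' cv sg b - Phi' cv sg s)"
      using K dev by simp
    ultimately show ?thesis
      by linarith
  qed
qed

lemma cell_majorant_has_integral:
  "((\<lambda>s. omega (1 - al) (x - (a + b) / 2) * (Phi' cv sg b - Phi' cv sg s)
      + Phi'' cv sg ((a + b) / 2) * (b - a) * omega (1 - al) (x - s)) has_integral
    omega (1 - al) (x - (a + b) / 2) * Phi_gap cv sg a b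
      + Phi'' cv sg ((a + b) / 2) * (b - a) * (omega_primitive al (x - a) - omega_primitive al (x - b)))
   {a..b}"
  using cell
  by (intro has_integral_add has_integral_mult_right Phi_gap_has_integral[OF sg(1,3)]
        cell_kernel_has_integral) auto

lemma cell_kernel_deviation_integrable:
  "(\<lambda>s. omega (1 - al) (x - s) * (v' s - v' b)) integrable_on {a..b}"
proof (rule integrable_on_Icc_if_continuous_on_Ioo_bounded
    [OF _ has_integral_integrable[OF cell_majorant_has_integral] cell_kernel_deviation_bound])
  have "continuous_on {a<..<b} v'"
    using cell by (auto intro: continuous_on_subset[OF continuous_on_admissible_derivative[OF adm]])
  moreover have "continuous_on {a<..<b} (\<lambda>s. (x - s) powr (- al) / Gamma (1 - al))"
    using cell Gamma_one_minus_pos[OF al(2)] by (intro continuous_intros) auto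
  then have "continuous_on {a<..<b} (\<lambda>s. omega (1 - al) (x - s))"
    by (rule continuous_on_cong[THEN iffD1, rotated 2]) (use cell in \<open>auto simp: omega_def\<close>)
  ultimately show "continuous_on {a<..<b} (\<lambda>s. omega (1 - al) (x - s) * (v' s - v' b))"
    by (intro continuous_intros)
qed

lemma cell_kernel_derivative_has_integral:
  "((\<lambda>s. omega (1 - al) (x - s) * v' s) has_integral
     integral {a..b} (\<lambda>s. omega (1 - al) (x - s) * (v' s - v' b))
       + v' b * (omega_primitive al (x - a) - omega_primitive al (x - b))) {a..b}"
proof -
  have "((\<lambda>s. omega (1 - al) (x - s) * (v' s - v' b) + v' b * omega (1 - al) (x - s)) has_integral
     integral {a..b} (\<lambda>s. omega (1 - al) (x - s) * (v' s - v' b))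
       + v' b * (omega_primitive al (x - a) - omega_primitive al (x - b))) {a..b}"
    by (intro has_integral_add has_integral_mult_right cell_kernel_has_integral
          integrable_integral cell_kernel_deviation_integrable)
  then show ?thesis
    by (simp add: algebra_simps)
qed

lemma cell_error_eq:
  "cell_error al v v' x a b = integral {a..b} (\<lambda>s. omega (1 - al) (x - s) * (v' s - v' b))
     - ((v b - v a) / (b - a) - v' b) * (omega_primitive al (x - a) - omega_primitive al (x - b))"
  using cell_kernel_derivative_has_integral
  by (simp add: cell_error_def integral_unique algebra_simps)

lemma cell_error_bound:
  defines "m \<equiv> (a + b) / 2"
    and "I \<equiv> omega_primitive al (x - a) - omega_primitive al (x - b)"
    and "J \<equiv> Phi_gap cv sg a b"
  shows "\<bar>cell_error al v v' x a b\<bar>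
    \<le> omega (1 - al) (x - m) * J + Phi'' cv sg m * (b - a) * I + J / (b - a) * I"
proof -
  have "\<bar>cell_error al v v' x a b\<bar> \<le> \<bar>integral {a..b} (\<lambda>s. omega (1 - al) (x - s) * (v' s - v' b))\<bar>
      + \<bar>((v b - v a) / (b - a) - v' b) * I\<bar>"
    unfolding cell_error_eq I_def by (rule abs_triangle_ineq4)
  moreover have "\<bar>integral {a..b} (\<lambda>s. omega (1 - al) (x - s) * (v' s - v' b))\<bar>
      \<le> omega (1 - al) (x - m) * J + Phi'' cv sg m * (b - a) * I"
    unfolding m_def I_def J_def
    by (rule has_integral_abs_le_on_Ioo[OF integrable_integral[OF cell_kernel_deviation_integrable]
          cell_majorant_has_integral cell_kernel_deviation_bound])
  moreover have "\<bar>(v b - v a) / (b - a) - v' b\<bar> \<le> J / (b - a)"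
    using cell_slope_deviation cell by (simp add: J_def pos_le_divide_eq)
  then have "\<bar>((v b - v a) / (b - a) - v' b) * I\<bar> \<le> J / (b - a) * I"
    using cell_kernel_integral_nonneg mult_right_mono unfolding I_def by (fastforce simp: abs_mult)
  ultimately show ?thesis
    by linarith
qed

text \<open>The deviation \<open>v' - v' b\<close> has mean \<open>(v b - v a)/(b - a) - v' b\<close>, so after subtracting
  that mean the kernel may be replaced by \<open>K - K a\<close>, which is at most \<open>K b - K a\<close> on a cell
  away from the singularity.\<close>

lemma cell_error_bound_interior:
  assumes "b < x"
  shows "\<bar>cell_error al v v' x a b\<bar>
    \<le> 2 * (omega (1 - al) (x - b) - omega (1 - al) (x - a)) * Phi_gap cv sg a b"
proof -
  define K where "K s = omega (1 - al) (x - s)" for s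
  define W where "W = (v b - v a) / (b - a) - v' b"
  define J where "J = Phi_gap cv sg a b"
  have const: "((\<lambda>s. c) has_integral c * (b - a)) {a..b}" for c
    using has_integral_const_real[of c a b] cell by (simp add: mult.commute)
  have "((\<lambda>s. K s * (v' s - v' b) - W * K s - K a * (v' s - v' b) + K a * W) has_integral
      integral {a..b} (\<lambda>s. K s * (v' s - v' b)) - W * (omega_primitive al (x - a) - omega_primitive al (x - b))
        - K a * (W * (b - a)) + K a * W * (b - a)) {a..b}"
    unfolding K_def W_def
    by (intro has_integral_add has_integral_diff has_integral_mult_right cell_kernel_has_integral
        integrable_integral cell_kernel_deviation_integrable cell_derivative_deviation_has_integral const)
  then have f: "((\<lambda>s. (K s - K a) * ((v' s - v' b) - W)) has_integral cell_error al v v' x a b) {a..b}"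
    unfolding cell_error_eq K_def W_def by (simp add: algebra_simps)
  have G: "((\<lambda>s. (K b - K a) * ((Phi' cv sg b - Phi' cv sg s) + \<bar>W\<bar>)) has_integral
      (K b - K a) * (J + \<bar>W\<bar> * (b - a))) {a..b}"
    unfolding J_def using cell
    by (intro has_integral_mult_right has_integral_add Phi_gap_has_integral[OF sg(1,3)] const) auto
  have "\<bar>(K s - K a) * ((v' s - v' b) - W)\<bar> \<le> (K b - K a) * ((Phi' cv sg b - Phi' cv sg s) + \<bar>W\<bar>)"
    if s: "s \<in> {a<..<b}" for s
  proof -
    have K: "0 \<le> K s - K a" "K s - K a \<le> K b - K a"
      using cell_kernel_mono[of a s] cell_kernel_mono[of s b] s assms unfolding K_def by auto
    have "\<bar>(v' s - v' b) - W\<bar> \<le> (Phi' cv sg b - Phi' cv sg s) + \<bar>W\<bar>"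
      using cell_derivative_deviation[OF s] by linarith
    then show ?thesis
      using K by (simp add: abs_mult mult_mono)
  qed
  then have "\<bar>cell_error al v v' x a b\<bar> \<le> (K b - K a) * (J + \<bar>W\<bar> * (b - a))"
    by (rule has_integral_abs_le_on_Ioo[OF f G])
  also have "\<dots> \<le> (K b - K a) * (2 * J)"
    using cell_slope_deviation cell_kernel_mono[of a b] cell assms
    by (intro mult_left_mono) (auto simp: J_def W_def K_def)
  finally show ?thesis
    by (simp add: K_def J_def algebra_simps)
qed

end

section \<open>Meshes, coefficients and DCC kernels\<close>

definition strict_mesh :: "(nat \<Rightarrow> real) \<Rightarrow> nat \<Rightarrow> bool" where
  "strict_mesh t N \<longleftrightarrow> t 0 = 0 \<and> (\<forall>i<N. t i < t (Suc i))"

lemma thalf_0: "thalf t 0 = t 0"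
  by (simp add: thalf_def)

lemma thalf_Suc: "thalf t (Suc k) = (t k + t (Suc k)) / 2"
  by (simp add: thalf_def tau_def field_simps)

lemma tauhalf_eq: "1 \<le> k \<Longrightarrow> tauhalf t k = thalf t k - thalf t (k - 1)"
proof (cases "k = 1")
  case False
  moreover assume "1 \<le> k"
  ultimately obtain j where "k = Suc (Suc j)"
    using le_Suc_ex[of 2 k] by auto
  then show ?thesis
    by (simp add: tauhalf_def thalf_def tau_def field_simps)
qed (simp add: tauhalf_def thalf_def tau_def)

lemma pker_diag: "pker al t n n = 1 / acoef al t n n"
  by simp

lemma pker_less: "k < n \<Longrightarrow> pker al t n k
    = 1 / acoef al t k k * (\<Sum>j\<in>{k+1..n}. (acoef al t j (k + 1) - acoef al t j k) * pker al t n j)"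
  by simp

declare pker.simps [simp del]

context
  fixes t :: "nat \<Rightarrow> real" and N :: nat
  assumes mesh: "strict_mesh t N"
begin

lemma mesh_strict_mono: "i < j \<Longrightarrow> j \<le> N \<Longrightarrow> t i < t j"
proof (induction j)
  case (Suc j)
  then have "t j < t (Suc j)"
    using mesh unfolding strict_mesh_def by simp
  with Suc show ?case
    by (cases "i = j") auto
qed simp

lemma thalf_less_Suc:
  assumes "k < N"
  shows "thalf t k < thalf t (Suc k)"
proof (cases k)
  case (Suc j)
  with mesh assms have "t j < t k" "t k < t (Suc k)"
    unfolding strict_mesh_def by auto
  with Suc show ?thesis
    by (simp add: thalf_Suc)
qed (use mesh assms in \<open>auto simp: strict_mesh_def thalf_Suc thalf_0\<close>)

lemma thalf_strict_mono: "i < j \<Longrightarrow> j \<le> N \<Longrightarrow> thalf t i < thalf t j"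
proof (induction j)
  case (Suc j)
  then show ?case
    using thalf_less_Suc[of j] by (cases "i = j") auto
qed simp

lemma thalf_mono: "i \<le> j \<Longrightarrow> j \<le> N \<Longrightarrow> thalf t i \<le> thalf t j"
  using thalf_strict_mono[of i j] by (cases "i = j") auto

lemma thalf_nonneg: "k \<le> N \<Longrightarrow> 0 \<le> thalf t k"
  using thalf_mono[of 0 k] mesh by (simp add: thalf_0 strict_mesh_def)

lemma thalf_pos: "1 \<le> k \<Longrightarrow> k \<le> N \<Longrightarrow> 0 < thalf t k"
  using thalf_strict_mono[of 0 k] mesh by (simp add: thalf_0 strict_mesh_def)

lemma thalf_less_last: "k \<le> N \<Longrightarrow> 1 \<le> N \<Longrightarrow> thalf t k < t N"
  using thalf_mono[of k N] mesh_strict_mono[of "N - 1" N] thalf_Suc[of t "N - 1"] by simp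

lemma tauhalf_pos: "1 \<le> k \<Longrightarrow> k \<le> N \<Longrightarrow> 0 < tauhalf t k"
  using thalf_strict_mono[of "k - 1" k] by (simp add: tauhalf_eq)

context
  fixes al :: real
  assumes al: "0 < al" "al < 1"
begin

lemma acoef_eq:
  assumes "1 \<le> k" "k \<le> n" "n \<le> N"
  shows "acoef al t n k = (omega_primitive al (thalf t n - thalf t (k - 1))
      - omega_primitive al (thalf t n - thalf t k)) / tauhalf t k"
proof -
  have "thalf t (k - 1) \<le> thalf t k" "thalf t k \<le> thalf t n"
    using thalf_mono assms by auto
  from omega_shift_has_integral[OF al this] show ?thesis
    by (simp add: acoef_def integral_unique)
qed

lemma acoef_eq_omega:
  assumes "1 \<le> k" "k \<le> n" "n \<le> N"
  obtains z where "thalf t n - thalf t k < z" "z < thalf t n - thalf t (k - 1)"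
    "acoef al t n k = omega (1 - al) z"
proof -
  define lo where "lo = thalf t n - thalf t k"
  define hi where "hi = thalf t n - thalf t (k - 1)"
  have lohi: "0 \<le> lo" "lo < hi" "hi - lo = tauhalf t k"
    using thalf_strict_mono[of "k - 1" k] thalf_mono[of k n] assms
    by (auto simp: lo_def hi_def tauhalf_eq)
  have "continuous_on {lo..hi} (omega_primitive al)"
    using lohi by (auto intro: continuous_on_subset[OF continuous_on_omega_primitive[OF al(2)]])
  moreover have "omega_primitive al differentiable (at z)" if "lo < z" for z
    using omega_primitive_has_real_derivative[OF al, of z] lohi that
    by (auto simp: real_differentiable_def)
  ultimately obtain l z where z: "lo < z" "z < hi" "(omega_primitive al has_real_derivative l) (at z)"
    "omega_primitive al hi - omega_primitive al lo = (hi - lo) * l"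
    using MVT[OF lohi(2)] by blast
  moreover have "l = omega (1 - al) z"
    using DERIV_unique[OF z(3) omega_primitive_has_real_derivative[OF al]] z lohi by auto
  ultimately show ?thesis
    using that lohi acoef_eq[OF assms] by (simp add: lo_def hi_def)
qed

lemma acoef_pos: "1 \<le> k \<Longrightarrow> k \<le> n \<Longrightarrow> n \<le> N \<Longrightarrow> 0 < acoef al t n k"
  using thalf_mono[of k n] omega_pos[OF al(2)]
  by (metis acoef_eq_omega diff_ge_0_iff_ge le_less_trans)

lemma acoef_le_omega:
  "1 \<le> k \<Longrightarrow> k < n \<Longrightarrow> n \<le> N \<Longrightarrow> acoef al t n k \<le> omega (1 - al) (thalf t n - thalf t k)"
  using thalf_strict_mono[of k n] omega_antimono[OF al]
  by (metis acoef_eq_omega diff_gt_0_iff_gt less_eq_real_def less_imp_le_nat)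

lemma omega_le_acoef_Suc:
  "k < n \<Longrightarrow> n \<le> N \<Longrightarrow> omega (1 - al) (thalf t n - thalf t k) \<le> acoef al t n (Suc k)"
  using thalf_mono[of "Suc k" n] omega_antimono[OF al] acoef_eq_omega[of "Suc k" n]
  by (smt (verit) Suc_leI diff_Suc_1 le_add1 plus_1_eq_Suc)

lemma acoef_mono: "1 \<le> k \<Longrightarrow> k < n \<Longrightarrow> n \<le> N \<Longrightarrow> acoef al t n k \<le> acoef al t n (Suc k)"
  using acoef_le_omega omega_le_acoef_Suc by (meson order_trans)

lemma acoef_diag:
  assumes "1 \<le> n" "n \<le> N"
  shows "acoef al t n n = tauhalf t n powr (- al) / Gamma (2 - al)"
proof -
  have h: "0 < tauhalf t n"
    using tauhalf_pos assms by simp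
  have "acoef al t n n = omega_primitive al (tauhalf t n) / tauhalf t n"
    using acoef_eq[of n n] assms tauhalf_eq[of n t] by (simp add: omega_primitive_def)
  also have "\<dots> = tauhalf t n powr (- al) / Gamma (2 - al)"
    using h by (simp add: omega_primitive_def powr_diff powr_minus divide_simps)
  finally show ?thesis .
qed

lemma pker_sum_acoef:
  "1 \<le> k \<Longrightarrow> k \<le> n \<Longrightarrow> n \<le> N \<Longrightarrow> (\<Sum>j=k..n. pker al t n j * acoef al t j k) = 1"
proof (induction "n - k" arbitrary: k)
  case 0
  then show ?case
    using acoef_pos[of n n] by (simp add: pker_diag)
next
  case (Suc d)
  then have "k < n" by simp
  have "(\<Sum>j=k..n. pker al t n j * acoef al t j k)
      = pker al t n k * acoef al t k k + (\<Sum>j=Suc k..n. pker al t n j * acoef al t j k)"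
    using \<open>k < n\<close> by (simp add: sum.atLeast_Suc_atMost)
  also have "pker al t n k * acoef al t k k
      = (\<Sum>j=Suc k..n. (acoef al t j (Suc k) - acoef al t j k) * pker al t n j)"
    using \<open>k < n\<close> acoef_pos[of k k] Suc.prems by (simp add: pker_less)
  finally have "(\<Sum>j=k..n. pker al t n j * acoef al t j k)
      = (\<Sum>j=Suc k..n. pker al t n j * acoef al t j (Suc k))"
    by (simp add: sum.distrib[symmetric] algebra_simps)
  then show ?case
    using Suc \<open>k < n\<close> by simp
qed

lemma pker_nonneg: "1 \<le> k \<Longrightarrow> k \<le> n \<Longrightarrow> n \<le> N \<Longrightarrow> 0 \<le> pker al t n k"
proof (induction "n - k" arbitrary: k rule: less_induct)
  case less
  show ?case
  proof (cases "k = n")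
    case True
    then show ?thesis
      using acoef_pos[of n n] less.prems by (simp add: pker_diag)
  next
    case False
    then have "k < n"
      using less.prems by simp
    have "0 \<le> (\<Sum>j\<in>{k+1..n}. (acoef al t j (k + 1) - acoef al t j k) * pker al t n j)"
      using less.hyps less.prems acoef_mono[of k] by (intro sum_nonneg mult_nonneg_nonneg) auto
    then show ?thesis
      using \<open>k < n\<close> acoef_pos[of k k] less.prems by (simp add: pker_less)
  qed
qed

lemma pker_omega_sum_le:
  assumes "1 \<le> n" "n \<le> N"
  shows "(\<Sum>j=1..n. pker al t n j * omega (1 - al) (thalf t j)) \<le> 1"
proof -
  have "(\<Sum>j=1..n. pker al t n j * omega (1 - al) (thalf t j)) \<le> (\<Sum>j=1..n. pker al t n j * acoef al t j 1)"
    using assms omega_le_acoef_Suc[of 0] pker_nonneg mesh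
    by (intro sum_mono mult_left_mono) (auto simp: thalf_0 strict_mesh_def)
  also have "\<dots> = 1"
    using pker_sum_acoef[of 1 n] assms by simp
  finally show ?thesis .
qed

end

end

section \<open>An abstract DCC estimate\<close>

lemma sum_triangle_swap:
  "(\<Sum>j=1..n. \<Sum>k=1..j-1. f j k) = (\<Sum>k=1..n. \<Sum>j=Suc k..n. f j k :: real)"
proof (induction n)
  case (Suc n)
  have "(\<Sum>k=1..Suc n. \<Sum>j=Suc k..Suc n. f j k) = (\<Sum>k=1..n. (\<Sum>j=Suc k..n. f j k) + f (Suc n) k)"
    by (simp add: sum.cl_ivl_Suc)
  also have "\<dots> = (\<Sum>k=1..n. \<Sum>j=Suc k..n. f j k) + (\<Sum>k=1..n. f (Suc n) k)"
    by (simp add: sum.distrib)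
  finally show ?case
    using Suc by (simp add: sum.cl_ivl_Suc)
qed simp

text \<open>An abstract form of the DCC estimate: \<open>p\<close> plays the DCC kernels, \<open>a\<close> the coefficients,
  \<open>Q k\<close> the local size of \<open>v\<close> on the \<open>k\<close>-th cell and \<open>w\<close> the weights \<open>\<omega>\<^sub>1\<^sub>-\<^sub>\<alpha>(t\<^sub>k\<^sub>-\<^sub>1\<^sub>/\<^sub>2)\<close>.\<close>

context
  fixes p w Q :: "nat \<Rightarrow> real" and a :: "nat \<Rightarrow> nat \<Rightarrow> real" and n :: nat and B :: real
  assumes p_nonneg: "\<And>j. 1 \<le> j \<Longrightarrow> j \<le> n \<Longrightarrow> 0 \<le> p j"
    and p_a_sum: "\<And>k. 1 \<le> k \<Longrightarrow> k \<le> n \<Longrightarrow> (\<Sum>j=k..n. p j * a j k) = 1"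
    and a_mono: "\<And>j k. 1 \<le> k \<Longrightarrow> k < j \<Longrightarrow> j \<le> n \<Longrightarrow> a j k \<le> a j (Suc k)"
    and Q_nonneg: "\<And>k. 1 \<le> k \<Longrightarrow> k \<le> n \<Longrightarrow> 0 \<le> Q k"
    and Q_first: "Q 1 \<le> B"
    and diag_bound: "\<And>k. 1 \<le> k \<Longrightarrow> k \<le> n \<Longrightarrow> a k k * Q k \<le> B * w k"
    and subdiag_bound: "\<And>k. 2 \<le> k \<Longrightarrow> k \<le> n \<Longrightarrow> a (k - 1) (k - 1) * Q k \<le> B * w (k - 1)"
    and w_nonneg: "\<And>k. 0 \<le> w k"
    and p_w_sum: "(\<Sum>j=1..n. p j * w j) \<le> 1"
begin

lemma p_a_sum_tail:
  assumes "2 \<le> k" "k < n"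
  shows "(\<Sum>j=Suc k..n. p j * a j (k - 1)) = 1 - p (k - 1) * a (k - 1) (k - 1) - p k * a k (k - 1)"
proof -
  have "(\<Sum>j=k-1..n. p j * a j (k - 1))
      = p (k - 1) * a (k - 1) (k - 1) + p k * a k (k - 1) + (\<Sum>j=Suc k..n. p j * a j (k - 1))"
    using assms by (simp add: sum.atLeast_Suc_atMost Suc_diff_Suc numeral_2_eq_2)
  moreover have "1 \<le> k - 1" "k - 1 \<le> n"
    using assms by auto
  ultimately show ?thesis
    using p_a_sum[of "k - 1"] by simp
qed

lemma column_sum_le:
  assumes "1 \<le> k" "k \<le> n"
  shows "(\<Sum>j=Suc k..n. p j * (2 * (a j (Suc k) - (if 2 \<le> k then a j (k - 1) else 0)) * Q k))
    \<le> 2 * B * ((if k = 1 then 1 else p (k - 1) * w (k - 1)) + p k * w k)"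
proof (cases "k = n")
  case True
  then show ?thesis
    using Q_first Q_nonneg[of 1] p_nonneg[of k] p_nonneg[of "k - 1"] w_nonneg assms by simp
next
  case False
  then have "k < n"
    using assms by simp
  have "(\<Sum>j=Suc k..n. p j * (2 * (a j (Suc k) - (if 2 \<le> k then a j (k - 1) else 0)) * Q k))
      = 2 * Q k * ((\<Sum>j=Suc k..n. p j * a j (Suc k))
          - (\<Sum>j=Suc k..n. p j * (if 2 \<le> k then a j (k - 1) else 0)))"
    by (simp add: sum_distrib_left sum_subtractf[symmetric] algebra_simps)
  also have "\<dots> = 2 * Q k * (1 - (\<Sum>j=Suc k..n. p j * (if 2 \<le> k then a j (k - 1) else 0)))"
    using p_a_sum[of "Suc k"] \<open>k < n\<close> by simp
  also have "\<dots> \<le> 2 * B * ((if k = 1 then 1 else p (k - 1) * w (k - 1)) + p k * w k)"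
  proof (cases "2 \<le> k")
    case True
    have "a k (k - 1) * Q k \<le> a k k * Q k"
      using a_mono[of "k - 1" k] Q_nonneg[of k] True \<open>k < n\<close> by (intro mult_right_mono) auto
    then have t1: "p k * (a k (k - 1) * Q k) \<le> p k * (B * w k)"
      using diag_bound[of k] p_nonneg[of k] True \<open>k < n\<close> by (intro mult_left_mono) auto
    have t2: "p (k - 1) * (a (k - 1) (k - 1) * Q k) \<le> p (k - 1) * (B * w (k - 1))"
      using subdiag_bound[of k] p_nonneg[of "k - 1"] True \<open>k < n\<close> by (intro mult_left_mono) auto
    have eq: "2 * Q k * (1 - (\<Sum>j=Suc k..n. p j * (if 2 \<le> k then a j (k - 1) else 0)))
        = 2 * (p (k - 1) * (a (k - 1) (k - 1) * Q k) + p k * (a k (k - 1) * Q k))"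
      unfolding if_P[OF True] p_a_sum_tail[OF True \<open>k < n\<close>] by (simp add: algebra_simps)
    show ?thesis
      unfolding eq using t1 t2 True by (simp add: algebra_simps)
  next
    case False
    with assms have "k = 1" by simp
    moreover have "0 \<le> B * (p 1 * w 1)"
      using Q_first Q_nonneg[of 1] p_nonneg[of 1] w_nonneg[of 1] assms by simp
    ultimately show ?thesis
      using Q_first by (simp add: algebra_simps)
  qed
  finally show ?thesis .
qed

lemma p_w_sum_shifted_le:
  assumes "1 \<le> n"
  shows "(\<Sum>k=1..n. if k = 1 then 1 else p (k - 1) * w (k - 1)) \<le> 2"
proof -
  have pw: "0 \<le> p k * w k" if "1 \<le> k" "k \<le> n" for k
    using p_nonneg[OF that] w_nonneg[of k] by simp
  have "(\<Sum>k=1..n. if k = 1 then 1 else p (k - 1) * w (k - 1)) = 1 + (\<Sum>k=1..n-1. p k * w k)"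
  proof -
    obtain m where m: "n = Suc m"
      using \<open>1 \<le> n\<close> by (cases n) auto
    have "(\<Sum>k=1..n. if k = 1 then 1 else p (k - 1) * w (k - 1))
        = 1 + (\<Sum>k=Suc 1..Suc m. if k = 1 then 1 else p (k - 1) * w (k - 1))"
      unfolding m by (subst sum.atLeast_Suc_atMost) auto
    also have "\<dots> = 1 + (\<Sum>k=1..m. p k * w k)"
      by (subst sum.shift_bounds_cl_Suc_ivl) simp
    finally show ?thesis
      using m by simp
  qed
  also have "\<dots> \<le> 1 + (\<Sum>k=1..n. p k * w k)"
    using pw by (intro add_left_mono sum_mono2) auto
  finally show ?thesis
    using p_w_sum by simp
qed

lemma weighted_error_sum_le:
  assumes "1 \<le> n"
    and R_bound: "\<And>j. 1 \<le> j \<Longrightarrow> j \<le> n \<Longrightarrow> \<bar>R j\<bar>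
      \<le> (\<Sum>k=1..j-1. 2 * (a j (Suc k) - (if 2 \<le> k then a j (k - 1) else 0)) * Q k) + 3 * a j j * Q j"
  shows "(\<Sum>j=1..n. p j * \<bar>R j\<bar>) \<le> 9 * B"
proof -
  define c where "c j k = 2 * (a j (Suc k) - (if 2 \<le> k then a j (k - 1) else 0)) * Q k" for j k
  have B: "0 \<le> B"
    using Q_first Q_nonneg[of 1] \<open>1 \<le> n\<close> by simp
  have "(\<Sum>j=1..n. p j * \<bar>R j\<bar>) \<le> (\<Sum>j=1..n. p j * (\<Sum>k=1..j-1. c j k) + 3 * (p j * (a j j * Q j)))"
  proof (rule sum_mono)
    fix j assume "j \<in> {1..n}"
    then have "p j * \<bar>R j\<bar> \<le> p j * ((\<Sum>k=1..j-1. c j k) + 3 * a j j * Q j)"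
      using R_bound p_nonneg unfolding c_def by (simp add: mult_left_mono)
    then show "p j * \<bar>R j\<bar> \<le> p j * (\<Sum>k=1..j-1. c j k) + 3 * (p j * (a j j * Q j))"
      by (simp add: algebra_simps)
  qed
  also have "\<dots> = (\<Sum>j=1..n. \<Sum>k=1..j-1. p j * c j k) + 3 * (\<Sum>j=1..n. p j * (a j j * Q j))"
    by (simp add: sum.distrib sum_distrib_left)
  also have "\<dots> = (\<Sum>k=1..n. \<Sum>j=Suc k..n. p j * c j k) + 3 * (\<Sum>j=1..n. p j * (a j j * Q j))"
    by (simp only: sum_triangle_swap)
  also have "\<dots> \<le> (\<Sum>k=1..n. 2 * B * ((if k = 1 then 1 else p (k - 1) * w (k - 1)) + p k * w k))
      + 3 * (\<Sum>j=1..n. p j * (B * w j))"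
  proof (rule add_mono)
    show "(\<Sum>k=1..n. \<Sum>j=Suc k..n. p j * c j k)
        \<le> (\<Sum>k=1..n. 2 * B * ((if k = 1 then 1 else p (k - 1) * w (k - 1)) + p k * w k))"
      using column_sum_le unfolding c_def by (intro sum_mono) (simp add: mult.assoc)
    show "3 * (\<Sum>j=1..n. p j * (a j j * Q j)) \<le> 3 * (\<Sum>j=1..n. p j * (B * w j))"
      using diag_bound p_nonneg by (intro mult_left_mono sum_mono) auto
  qed
  also have "\<dots> = 2 * B * ((\<Sum>k=1..n. if k = 1 then 1 else p (k - 1) * w (k - 1)) + (\<Sum>k=1..n. p k * w k))
      + 3 * B * (\<Sum>j=1..n. p j * w j)"
    by (simp add: sum.distrib sum_distrib_left algebra_simps)
  also have "\<dots> \<le> 2 * B * (2 + 1) + 3 * B * 1"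
    using p_w_sum_shifted_le[OF \<open>1 \<le> n\<close>] p_w_sum B by (intro add_mono mult_left_mono) auto
  finally show ?thesis
    by simp
qed

end

section \<open>The consistency error on a strict mesh\<close>

definition cell_size :: "real \<Rightarrow> real \<Rightarrow> (nat \<Rightarrow> real) \<Rightarrow> nat \<Rightarrow> real" where
  "cell_size cv sg t k = Phi_gap cv sg (thalf t (k - 1)) (thalf t k)
     + Phi'' cv sg ((thalf t (k - 1) + thalf t k) / 2) * (tauhalf t k)\<^sup>2"

lemma cell_size_le:
  assumes cv: "0 < cv" and sg: "0 < sg" "sg < 2" "sg \<noteq> 1"
    and k: "1 \<le> k" and a: "0 < thalf t (k - 1)" "thalf t (k - 1) < thalf t k"
  shows "cell_size cv sg t k \<le> 2 * Phi'' cv sg (thalf t (k - 1)) * (tauhalf t k)\<^sup>2"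
proof -
  have "Phi_gap cv sg (thalf t (k - 1)) (thalf t k) \<le> Phi'' cv sg (thalf t (k - 1)) * (tauhalf t k)\<^sup>2"
    using Phi_gap_le[OF cv sg a] tauhalf_eq[OF k] by simp
  moreover have "Phi'' cv sg ((thalf t (k - 1) + thalf t k) / 2) \<le> Phi'' cv sg (thalf t (k - 1))"
    using a by (intro Phi''_antimono[OF cv sg(2)]) auto
  then have "Phi'' cv sg ((thalf t (k - 1) + thalf t k) / 2) * (tauhalf t k)\<^sup>2
      \<le> Phi'' cv sg (thalf t (k - 1)) * (tauhalf t k)\<^sup>2"
    by (rule mult_right_mono) simp
  ultimately show ?thesis
    unfolding cell_size_def by simp
qed

lemma cell_size_first_le:
  assumes cv: "0 < cv" and sg: "0 < sg" "sg < 2" "sg \<noteq> 1"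
    and t0: "thalf t 0 = 0" and h: "0 < thalf t 1"
  shows "cell_size cv sg t 1 \<le> cv * (2 * (thalf t 1)\<^sup>2 + (1 / sg + 4) * thalf t 1 powr sg)"
proof -
  define h where "h = thalf t 1"
  have "(h / 2) powr (sg - 2) * h\<^sup>2 = 2 powr (2 - sg) * h powr sg"
    using \<open>0 < thalf t 1\<close> unfolding h_def
    by (simp add: powr_divide powr_diff power2_eq_square powr_minus divide_simps)
  moreover have "2 powr (2 - sg) * h powr sg \<le> 4 * h powr sg"
    using powr_mono[of "2 - sg" 2 2] sg by (intro mult_right_mono) auto
  ultimately have "Phi'' cv sg (h / 2) * h\<^sup>2 \<le> cv * (h\<^sup>2 + 4 * h powr sg)"
    using cv unfolding Phi''_def by (simp add: algebra_simps mult_right_mono)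
  moreover have "cell_size cv sg t 1 = cv * (h\<^sup>2 / 2 + h powr sg / sg) + Phi'' cv sg (h / 2) * h\<^sup>2"
    using Phi_gap_0[OF sg(1,3) h] t0 tauhalf_eq[of 1 t] by (simp add: cell_size_def h_def)
  ultimately have "cell_size cv sg t 1 \<le> cv * (h\<^sup>2 / 2 + h powr sg / sg + (h\<^sup>2 + 4 * h powr sg))"
    by (simp add: distrib_left)
  also have "\<dots> \<le> cv * (2 * h\<^sup>2 + (1 / sg + 4) * h powr sg)"
    using cv by (intro mult_left_mono) (auto simp: distrib_right)
  finally show ?thesis
    unfolding h_def .
qed

context
  fixes al sg cv T :: real and t :: "nat \<Rightarrow> real" and N :: nat and v v' v'' :: "real \<Rightarrow> real"
  assumes al: "0 < al" "al < 1" and sg: "0 < sg" "sg < 2" "sg \<noteq> 1" and cv: "0 < cv"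
    and adm: "admissible T cv sg v v' v''"
    and mesh: "strict_mesh t N" and N: "1 \<le> N" and last: "t N \<le> T"
begin

lemma thalf_less_T: "k \<le> N \<Longrightarrow> thalf t k < T"
  using thalf_less_last[OF mesh _ N] last by fastforce

lemma cell_in_range:
  assumes "1 \<le> k" "k \<le> n" "n \<le> N"
  shows "0 \<le> thalf t (k - 1)" "thalf t (k - 1) < thalf t k" "thalf t k \<le> thalf t n" "thalf t n < T"
  using thalf_nonneg[OF mesh] thalf_strict_mono[OF mesh, of "k - 1" k] thalf_mono[OF mesh, of k n]
    thalf_less_T assms by auto

lemma Phi_gap_cell_nonneg: "1 \<le> k \<Longrightarrow> k \<le> N \<Longrightarrow> 0 \<le> Phi_gap cv sg (thalf t (k - 1)) (thalf t k)"
  using cell_in_range[of k k] by (intro Phi_gap_nonneg[OF cv sg(1,3)]) auto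

lemma cell_size_ge: "1 \<le> k \<Longrightarrow> k \<le> N \<Longrightarrow> Phi_gap cv sg (thalf t (k - 1)) (thalf t k) \<le> cell_size cv sg t k"
  using Phi''_pos[OF cv] unfolding cell_size_def by (simp add: less_imp_le)

lemma cell_size_nonneg: "1 \<le> k \<Longrightarrow> k \<le> N \<Longrightarrow> 0 \<le> cell_size cv sg t k"
  using Phi_gap_cell_nonneg cell_size_ge by (meson order_trans)

lemma caputo_eq_sum_cells:
  assumes "1 \<le> n" "n \<le> N"
  shows "caputo al v (thalf t n)
    = (\<Sum>k=1..n. integral {thalf t (k - 1)..thalf t k} (\<lambda>s. omega (1 - al) (thalf t n - s) * v' s))"
proof -
  define F where "F s = omega (1 - al) (thalf t n - s) * v' s" for s
  have "(F has_integral (\<Sum>k=1..m. integral {thalf t (k - 1)..thalf t k} F)) {0..thalf t m}"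
    if "m \<le> n" for m
    using that
  proof (induction m)
    case 0
    show ?case
      using mesh has_integral_refl(1)[of F 0] by (simp add: thalf_0 strict_mesh_def)
  next
    case (Suc m)
    have "F integrable_on {thalf t m..thalf t (Suc m)}"
      using cell_kernel_derivative_has_integral[OF al sg cv adm cell_in_range[of "Suc m" n]] Suc.prems assms
      unfolding F_def by auto
    from has_integral_combine[OF _ _ Suc.IH integrable_integral[OF this]] show ?case
      using cell_in_range[of "Suc m" n] Suc.prems assms by (simp add: add.commute)
  qed
  then have "(F has_integral (\<Sum>k=1..n. integral {thalf t (k - 1)..thalf t k} F)) {0..thalf t n}"
    by simp
  \<comment> \<open>\<open>deriv v\<close> is a two-sided derivative; it is \<open>v'\<close> here only because \<open>thalf t n < T\<close>.\<close>
  moreover have "omega (1 - al) (thalf t n - s) * deriv v s = F s" if "s \<in> {0..thalf t n} - {0}" for s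
    using that admissible_has_real_derivative(1)[OF adm, of s] thalf_less_T[of n] assms
    by (auto simp: F_def DERIV_imp_deriv)
  ultimately show ?thesis
    unfolding caputo_def F_def using has_integral_spike_finite[of "{0}"] integral_unique
    by (metis (no_types, lifting) finite.emptyI finite_insert)
qed

lemma Rerr_eq_sum_cell_error:
  assumes "1 \<le> n" "n \<le> N"
  shows "Rerr al t v n = (\<Sum>k=1..n. cell_error al v v' (thalf t n) (thalf t (k - 1)) (thalf t k))"
proof -
  have "acoef al t n k * (v (thalf t k) - v (thalf t (k - 1)))
      = (v (thalf t k) - v (thalf t (k - 1))) / (thalf t k - thalf t (k - 1))
        * (omega_primitive al (thalf t n - thalf t (k - 1)) - omega_primitive al (thalf t n - thalf t k))"
    if "k \<in> {1..n}" for k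
    using acoef_eq[OF mesh al, of k n] tauhalf_eq[of k t] that assms by simp
  then show ?thesis
    unfolding Rerr_def caputo_eq_sum_cells[OF assms] cell_error_def sum_subtractf[symmetric]
    by (intro sum.cong) auto
qed

lemma cell_error_interior_le:
  assumes "1 \<le> k" "k < n" "n \<le> N"
  shows "\<bar>cell_error al v v' (thalf t n) (thalf t (k - 1)) (thalf t k)\<bar>
    \<le> 2 * (acoef al t n (Suc k) - (if 2 \<le> k then acoef al t n (k - 1) else 0)) * cell_size cv sg t k"
proof -
  define Ka where "Ka = omega (1 - al) (thalf t n - thalf t (k - 1))"
  define Kb where "Kb = omega (1 - al) (thalf t n - thalf t k)"
  define J where "J = Phi_gap cv sg (thalf t (k - 1)) (thalf t k)"
  have cell: "0 \<le> thalf t (k - 1)" "thalf t (k - 1) < thalf t k" "thalf t k < thalf t n" "thalf t n < T"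
    using cell_in_range[of k n] thalf_strict_mono[OF mesh assms(2,3)] assms by auto
  have Kb: "Kb \<le> acoef al t n (Suc k)"
    unfolding Kb_def using omega_le_acoef_Suc[OF mesh al assms(2,3)] .
  have Ka: "(if 2 \<le> k then acoef al t n (k - 1) else 0) \<le> Ka"
    using acoef_le_omega[OF mesh al, of "k - 1" n] omega_nonneg[OF al(2)] assms
    unfolding Ka_def by auto
  have "Ka \<le> Kb"
    unfolding Ka_def Kb_def using cell by (intro omega_antimono[OF al]) auto
  moreover have "0 \<le> J" "J \<le> cell_size cv sg t k"
    unfolding J_def using Phi_gap_cell_nonneg cell_size_ge assms by auto
  ultimately have "2 * (Kb - Ka) * J
      \<le> 2 * (acoef al t n (Suc k) - (if 2 \<le> k then acoef al t n (k - 1) else 0)) * cell_size cv sg t k"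
    using Ka Kb by (intro mult_mono) auto
  then show ?thesis
    using cell_error_bound_interior[OF al sg cv adm cell(1,2) less_imp_le[OF cell(3)] cell(4,3)]
    unfolding Ka_def Kb_def J_def by linarith
qed

lemma cell_error_last_le:
  assumes "1 \<le> n" "n \<le> N"
  shows "\<bar>cell_error al v v' (thalf t n) (thalf t (n - 1)) (thalf t n)\<bar> \<le> 3 * acoef al t n n * cell_size cv sg t n"
proof -
  define h where "h = tauhalf t n"
  define A where "A = acoef al t n n"
  define J where "J = Phi_gap cv sg (thalf t (n - 1)) (thalf t n)"
  define P where "P = Phi'' cv sg ((thalf t (n - 1) + thalf t n) / 2)"
  have h: "0 < h" "thalf t n - thalf t (n - 1) = h"
    using tauhalf_pos[OF mesh assms] tauhalf_eq[of n t] assms by (auto simp: h_def)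
  have A: "0 < A" "A = h powr (- al) / Gamma (2 - al)"
    using acoef_pos[OF mesh al, of n n] acoef_diag[OF mesh al assms] assms by (auto simp: A_def h_def)
  have I: "omega_primitive al (thalf t n - thalf t (n - 1)) - omega_primitive al (thalf t n - thalf t n) = h * A"
    using acoef_eq[OF mesh al, of n n] assms h by (simp add: A_def h_def)
  have mid: "thalf t n - (thalf t (n - 1) + thalf t n) / 2 = h / 2"
    unfolding h(2)[symmetric] by (simp add: field_simps)
  have "\<bar>cell_error al v v' (thalf t n) (thalf t (n - 1)) (thalf t n)\<bar>
      \<le> omega (1 - al) (h / 2) * J + P * h * (h * A) + J / h * (h * A)"
    using cell_error_bound[OF al sg cv adm cell_in_range[of n n]] assms
    unfolding mid I J_def P_def unfolding h(2) by simp
  also have "\<dots> \<le> 2 * A * J + A * (P * h\<^sup>2) + A * J"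
  proof -
    have "omega (1 - al) (h / 2) \<le> 2 * A"
      using omega_half_le[OF al h(1)] A(2) by simp
    then have "omega (1 - al) (h / 2) * J \<le> 2 * A * J"
      using Phi_gap_cell_nonneg[of n] assms unfolding J_def by (intro mult_right_mono) auto
    then show ?thesis
      using h(1) by (simp add: power2_eq_square algebra_simps)
  qed
  also have "\<dots> \<le> 3 * A * cell_size cv sg t n"
  proof -
    have "0 \<le> A * (P * h\<^sup>2)"
      using A(1) Phi''_pos[OF cv, of sg] unfolding P_def by (intro mult_nonneg_nonneg) (auto intro: less_imp_le)
    then show ?thesis
      by (simp add: cell_size_def J_def P_def h_def algebra_simps)
  qed
  finally show ?thesis
    unfolding A_def .
qed

lemma Rerr_bound:
  assumes "1 \<le> n" "n \<le> N"
  shows "\<bar>Rerr al t v n\<bar> \<le> (\<Sum>k=1..n-1. 2 * (acoef al t n (Suc k) - (if 2 \<le> k then acoef al t n (k - 1) else 0))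
      * cell_size cv sg t k) + 3 * acoef al t n n * cell_size cv sg t n"
proof -
  let ?e = "\<lambda>k. cell_error al v v' (thalf t n) (thalf t (k - 1)) (thalf t k)"
  have "\<bar>Rerr al t v n\<bar> \<le> (\<Sum>k=1..n. \<bar>?e k\<bar>)"
    unfolding Rerr_eq_sum_cell_error[OF assms] by (rule sum_abs)
  also have "\<dots> = (\<Sum>k=1..n-1. \<bar>?e k\<bar>) + \<bar>?e n\<bar>"
    using assms by (cases n) (auto simp: sum.cl_ivl_Suc)
  also have "\<dots> \<le> (\<Sum>k=1..n-1. 2 * (acoef al t n (Suc k) - (if 2 \<le> k then acoef al t n (k - 1) else 0))
      * cell_size cv sg t k) + 3 * acoef al t n n * cell_size cv sg t n"
  proof (intro add_mono sum_mono)
    fix k assume "k \<in> {1..n-1}"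
    then show "\<bar>?e k\<bar> \<le> 2 * (acoef al t n (Suc k) - (if 2 \<le> k then acoef al t n (k - 1) else 0))
        * cell_size cv sg t k"
      using assms by (intro cell_error_interior_le) auto
  qed (rule cell_error_last_le[OF assms])
  finally show ?thesis .
qed

lemma pker_weighted_Rerr_sum_le:
  assumes first: "cell_size cv sg t 1 \<le> B"
    and diag: "\<And>k. 1 \<le> k \<Longrightarrow> k \<le> N \<Longrightarrow>
      acoef al t k k * cell_size cv sg t k \<le> B * omega (1 - al) (thalf t k)"
    and subdiag: "\<And>k. 2 \<le> k \<Longrightarrow> k \<le> N \<Longrightarrow>
      acoef al t (k - 1) (k - 1) * cell_size cv sg t k \<le> B * omega (1 - al) (thalf t (k - 1))"
    and n: "1 \<le> n" "n \<le> N"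
  shows "(\<Sum>j=1..n. pker al t n j * \<bar>Rerr al t v j\<bar>) \<le> 9 * B"
proof (rule weighted_error_sum_le[where a = "acoef al t" and Q = "cell_size cv sg t"
    and w = "\<lambda>k. omega (1 - al) (thalf t k)"])
  show "(\<Sum>j=1..n. pker al t n j * omega (1 - al) (thalf t j)) \<le> 1"
    by (rule pker_omega_sum_le[OF mesh al n])
qed (use n first diag subdiag Rerr_bound cell_size_nonneg pker_nonneg[OF mesh al]
      pker_sum_acoef[OF mesh al] acoef_mono[OF mesh al] omega_nonneg[OF al(2)] in auto)

end

section \<open>Graded meshes\<close>

lemma powr_sub_powr_le:
  fixes x y g :: real
  assumes "0 \<le> y" "y \<le> x" "g \<ge> 1"
  shows "x powr g - y powr g \<le> g * x powr (g - 1) * (x - y)"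
proof (cases "y = x")
  case True then show ?thesis by simp
next
  case False
  then have yx: "y < x" using assms by simp
  have c: "continuous_on {y..x} (\<lambda>z. z powr g)"
    by (rule continuous_on_powr') (use assms in \<open>auto intro: continuous_intros\<close>)
  have d: "\<And>z. y < z \<Longrightarrow> z < x \<Longrightarrow> (\<lambda>z. z powr g) differentiable (at z)"
    using has_real_derivative_powr assms real_differentiable_def by (metis le_less_trans)
  obtain l z where z: "y < z" "z < x" "((\<lambda>z. z powr g) has_real_derivative l) (at z)" "x powr g - y powr g = (x - y) * l"
    using MVT[OF yx c d] by blast
  have zpos: "z > 0" using z assms by linarith
  have "l = g * z powr (g - 1)" using DERIV_unique[OF z(3) has_real_derivative_powr[OF zpos]] .
  moreover have "z powr (g - 1) \<le> x powr (g - 1)" by (rule powr_mono2) (use assms z zpos in auto)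
  ultimately have "l \<le> g * x powr (g - 1)" using assms by (simp add: mult_left_mono)
  then show ?thesis using z(4) yx by (simp add: mult.commute mult_left_mono)
qed

lemma powr_sub_powr_ge:
  fixes x y g :: real
  assumes "0 \<le> y" "y \<le> x" "g \<ge> 1"
  shows "x powr (g - 1) * (x - y) \<le> x powr g - y powr g"
proof (cases "x = 0")
  case True then show ?thesis using assms by simp
next
  case False
  then have x: "x > 0" using assms by simp
  have xg: "x powr g = x powr (g - 1) * x" using x by (simp add: powr_diff)
  have "y powr g \<le> x powr (g - 1) * y"
  proof (cases "y = 0")
    case True then show ?thesis by simp
  next
    case False
    then have y: "y > 0" using assms by simp
    have "y powr g = y powr (g - 1) * y" using y by (simp add: powr_diff)
    also have "\<dots> \<le> x powr (g - 1) * y" by (intro mult_right_mono powr_mono2) (use assms y in auto)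
    finally show ?thesis .
  qed
  then show ?thesis using xg by (simp add: algebra_simps)
qed

context
  fixes T g :: real and N :: nat
  assumes T: "0 < T" and g: "1 \<le> g" and N: "2 \<le> N"
begin

lemma graded_mesh_eq: "graded_mesh T g N k = T * (real k / real N) powr g"
  by (simp add: graded_mesh_def)

lemma graded_mesh_strict: "strict_mesh (graded_mesh T g N) N"
  unfolding strict_mesh_def
proof (intro conjI allI impI)
  fix i assume "i < N"
  have "(real i / real N) powr g < (real (Suc i) / real N) powr g"
    using g N by (intro powr_less_mono2) (auto simp: divide_strict_right_mono)
  then show "graded_mesh T g N i < graded_mesh T g N (Suc i)"
    using T by (simp add: graded_mesh_def)
qed (simp add: graded_mesh_def)

lemma graded_mesh_last: "graded_mesh T g N N = T"
  using N by (simp add: graded_mesh_def)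

lemma graded_mesh_nonneg: "0 \<le> graded_mesh T g N k"
  using T by (simp add: graded_mesh_def)

lemma graded_mesh_mono: "i \<le> j \<Longrightarrow> graded_mesh T g N i \<le> graded_mesh T g N j"
  using T g by (auto simp: graded_mesh_def intro!: mult_left_mono powr_mono2 divide_right_mono)

lemma thalf_graded_le: "1 \<le> k \<Longrightarrow> thalf (graded_mesh T g N) k \<le> graded_mesh T g N k"
  using graded_mesh_mono[of "k - 1" k] by (cases k) (auto simp: thalf_Suc)

lemma thalf_graded_ge: "1 \<le> k \<Longrightarrow> graded_mesh T g N k / 2 \<le> thalf (graded_mesh T g N) k"
  using graded_mesh_nonneg[of "k - 1"] by (cases k) (auto simp: thalf_Suc)

lemma tauhalf_graded_ge:
  assumes "1 \<le> k"
  shows "(graded_mesh T g N k - graded_mesh T g N (k - 1)) / 2 \<le> tauhalf (graded_mesh T g N) k"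
proof (cases "k = 1")
  case True
  then show ?thesis
    by (simp add: tauhalf_def tau_def)
next
  case False
  then show ?thesis
    using assms graded_mesh_mono[of "k - 2" "k - 1"]
    by (auto simp: tauhalf_def tau_def numeral_2_eq_2)
qed

lemma tauhalf_graded: "2 \<le> k \<Longrightarrow> tauhalf (graded_mesh T g N) k
    = (graded_mesh T g N k - graded_mesh T g N (k - 2)) / 2"
  by (simp add: tauhalf_def tau_def numeral_2_eq_2 field_simps)

lemma tauhalf_graded_le:
  assumes "2 \<le> k"
  shows "tauhalf (graded_mesh T g N) k \<le> g * (T * (real k / real N) powr (g - 1) / N)"
proof -
  define X where "X = real k / real N"
  define Y where "Y = real (k - 2) / real N"
  have XY: "X - Y = 2 / N" "0 \<le> Y" "Y \<le> X"
    using assms N by (auto simp: X_def Y_def of_nat_diff diff_divide_distrib[symmetric] divide_right_mono)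
  have "tauhalf (graded_mesh T g N) k = T * (X powr g - Y powr g) / 2"
    using assms by (simp add: tauhalf_graded graded_mesh_eq X_def Y_def algebra_simps)
  also have "\<dots> \<le> T * (g * X powr (g - 1) * (X - Y)) / 2"
    using powr_sub_powr_le[OF XY(2,3) g] T by (intro divide_right_mono mult_left_mono) auto
  also have "\<dots> = g * (T * X powr (g - 1) / N)"
    unfolding XY by simp
  finally show ?thesis
    unfolding X_def .
qed

lemma tauhalf_graded_pred_ge:
  assumes "2 \<le> k" "k \<le> N"
  shows "2 powr (- g) * (T * (real k / real N) powr (g - 1) / N) \<le> tauhalf (graded_mesh T g N) (k - 1)"
proof -
  define X where "X = real k / real N"
  define Y where "Y = real (k - 2) / real N"
  define Z where "Z = real (k - 1) / real N"
  have ZY: "Z - Y = 1 / N" "0 \<le> Y" "Y \<le> Z"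
    using assms N by (auto simp: Z_def Y_def of_nat_diff diff_divide_distrib[symmetric] divide_right_mono)
  have "(X / 2) powr (g - 1) = X powr (g - 1) * 2 powr (- g) * 2"
    by (simp add: powr_divide powr_diff powr_minus divide_simps)
  moreover have "(X / 2) powr (g - 1) \<le> Z powr (g - 1)"
    using assms g by (intro powr_mono2) (auto simp: X_def Z_def divide_simps)
  ultimately have "T * (X powr (g - 1) * 2 powr (- g) * 2) / N / 2 \<le> T * Z powr (g - 1) / N / 2"
    using T by (intro divide_right_mono mult_left_mono) auto
  then have "2 powr (- g) * (T * X powr (g - 1) / N) \<le> T * (Z powr (g - 1) * (Z - Y)) / 2"
    unfolding ZY by (simp add: field_simps)
  also have "\<dots> \<le> T * (Z powr g - Y powr g) / 2"
    using powr_sub_powr_ge[OF ZY(2,3) g] T by (intro divide_right_mono mult_left_mono) auto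
  also have "\<dots> = (graded_mesh T g N (k - 1) - graded_mesh T g N (k - 1 - 1)) / 2"
    by (simp add: graded_mesh_eq Z_def Y_def numeral_2_eq_2 algebra_simps)
  also have "\<dots> \<le> tauhalf (graded_mesh T g N) (k - 1)"
    using assms by (intro tauhalf_graded_ge) auto
  finally show ?thesis
    unfolding X_def .
qed

lemma thalf_graded_pred_ge:
  assumes "2 \<le> k"
  shows "2 powr (- g - 1) * (T * (real k / real N) powr g) \<le> thalf (graded_mesh T g N) (k - 1)"
proof -
  define X where "X = real k / real N"
  define Z where "Z = real (k - 1) / real N"
  have "(X / 2) powr g \<le> Z powr g"
    using assms g by (intro powr_mono2) (auto simp: X_def Z_def divide_simps)
  then have "X powr g * 2 powr (- g - 1) * 2 \<le> Z powr g"
    by (simp add: powr_divide powr_minus divide_simps powr_diff powr_add)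
  then have "2 powr (- g - 1) * (T * X powr g) \<le> graded_mesh T g N (k - 1) / 2"
    using T by (simp add: graded_mesh_eq Z_def algebra_simps divide_simps)
  also have "\<dots> \<le> thalf (graded_mesh T g N) (k - 1)"
    using assms by (intro thalf_graded_ge) auto
  finally show ?thesis
    unfolding X_def .
qed

lemma thalf_graded_le_scale:
  assumes "1 \<le> j" "j \<le> k"
  shows "thalf (graded_mesh T g N) j \<le> T * (real k / real N) powr g"
  using thalf_graded_le[OF assms(1)] graded_mesh_mono[OF assms(2)] by (simp add: graded_mesh_eq)

end

lemma graded_powr_split:
  fixes X N T g al b :: real
  assumes "X > 0" "N > 0" "T > 0"
  shows "(T * X powr (g - 1) / N) powr (2 - al) * (T * X powr g) powr b
       = T powr (2 - al + b) * X powr ((g - 1) * (2 - al) + g * b) * N powr (- (2 - al))"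
proof -
  have "N powr (al - 2) * N powr (2 - al) = 1"
    using assms by (simp add: powr_add[symmetric])
  then show ?thesis
    using assms by (simp add: powr_mult powr_divide powr_powr powr_add powr_minus divide_simps)
qed

lemma graded_exponent_le:
  fixes X N al sg g :: real
  assumes X: "1 / N \<le> X" "X \<le> 1" and N: "N \<ge> 1" and al: "0 < al" "al < 1"
    and sg: "0 < sg" and g: "g \<ge> 1"
  shows "X powr ((g - 1) * (2 - al) + g * al) * N powr (- (2 - al)) \<le> N powr (- min (g * sg) (2 - al))"
    and "X powr ((g - 1) * (2 - al) + g * (sg - 2 + al)) * N powr (- (2 - al))
      \<le> N powr (- min (g * sg) (2 - al))"
proof -
  have Xp: "X > 0"
    using X N by (smt (verit) divide_pos_pos)
  have Nr: "N powr (- (2 - al)) \<le> N powr (- min (g * sg) (2 - al))"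
    using N by (intro powr_mono) auto
  have "X powr ((g - 1) * (2 - al) + g * al) \<le> 1"
    using g al Xp X by (intro powr_le1) auto
  then show "X powr ((g - 1) * (2 - al) + g * al) * N powr (- (2 - al)) \<le> N powr (- min (g * sg) (2 - al))"
    using Nr by (meson mult_left_le_one_le order_trans powr_ge_zero)
  have e: "(g - 1) * (2 - al) + g * (sg - 2 + al) = g * sg - (2 - al)"
    by (simp add: algebra_simps)
  show "X powr ((g - 1) * (2 - al) + g * (sg - 2 + al)) * N powr (- (2 - al))
      \<le> N powr (- min (g * sg) (2 - al))"
  proof (cases "g * sg \<ge> 2 - al")
    case True
    have "X powr (g * sg - (2 - al)) \<le> 1"
      using True Xp X by (intro powr_le1) auto
    then show ?thesis
      unfolding e using Nr by (meson mult_left_le_one_le order_trans powr_ge_zero)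
  next
    case False
    have "X powr (g * sg - (2 - al)) \<le> (1 / N) powr (g * sg - (2 - al))"
      using False X N by (intro powr_mono2') auto
    also have "\<dots> = N powr (- (g * sg - (2 - al)))"
      using N powr_add[of N "2 - al - g * sg" "g * sg - (2 - al)"]
      by (simp add: powr_divide powr_minus divide_simps)
    finally have "X powr (g * sg - (2 - al)) * N powr (- (2 - al))
        \<le> N powr (- (g * sg - (2 - al))) * N powr (- (2 - al))"
      by (rule mult_right_mono) simp
    also have "\<dots> = N powr (- min (g * sg) (2 - al))"
      using False by (simp add: powr_add[symmetric])
    finally show ?thesis
      unfolding e .
  qed
qed

lemma graded_scale_product_le:
  fixes al sg g T N X :: real
  assumes al: "0 < al" "al < 1" and sg: "0 < sg" and g: "1 \<le> g" and T: "0 < T"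
    and N: "1 \<le> N" and X: "1 / N \<le> X" "X \<le> 1"
  defines "U \<equiv> T * X powr (g - 1) / N" and "V \<equiv> T * X powr g"
  shows "(1 + V powr (sg - 2)) * (U powr (2 - al) * V powr al)
    \<le> (T powr 2 + T powr sg) * N powr (- min (g * sg) (2 - al))"
proof -
  have Xp: "X > 0"
    using X N by (smt (verit) divide_pos_pos)
  have "U powr (2 - al) * V powr al
      = T powr 2 * (X powr ((g - 1) * (2 - al) + g * al) * N powr (- (2 - al)))"
    unfolding U_def V_def using graded_powr_split[OF Xp _ T, of N g al al] N by simp
  also have "\<dots> \<le> T powr 2 * N powr (- min (g * sg) (2 - al))"
    by (rule mult_left_mono[OF graded_exponent_le(1)[OF X N al sg g]]) simp
  finally have K1: "U powr (2 - al) * V powr al \<le> T powr 2 * N powr (- min (g * sg) (2 - al))" .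
  have "U powr (2 - al) * V powr (sg - 2 + al)
      = T powr sg * (X powr ((g - 1) * (2 - al) + g * (sg - 2 + al)) * N powr (- (2 - al)))"
    unfolding U_def V_def using graded_powr_split[OF Xp _ T, of N g al "sg - 2 + al"] N by simp
  also have "\<dots> \<le> T powr sg * N powr (- min (g * sg) (2 - al))"
    by (rule mult_left_mono[OF graded_exponent_le(2)[OF X N al sg g]]) simp
  finally have K2: "U powr (2 - al) * V powr (sg - 2 + al) \<le> T powr sg * N powr (- min (g * sg) (2 - al))" .
  have "V powr (sg - 2) * V powr al = V powr (sg - 2 + al)"
    by (simp add: powr_add)
  then have eq: "(1 + V powr (sg - 2)) * (U powr (2 - al) * V powr al)
      = U powr (2 - al) * V powr al + U powr (2 - al) * V powr (sg - 2 + al)"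
    by (metis distrib_right mult.commute mult.left_commute mult_1)
  have "(1 + V powr (sg - 2)) * (U powr (2 - al) * V powr al)
      \<le> T powr 2 * N powr (- min (g * sg) (2 - al)) + T powr sg * N powr (- min (g * sg) (2 - al))"
    unfolding eq using K1 K2 by linarith
  then show ?thesis
    by (simp add: distrib_right)
qed

lemma Phi''_le_scale:
  assumes cv: "0 < cv" and sg: "sg < 2" and g: "0 \<le> g" and V: "0 < V" and s: "2 powr (- g - 1) * V \<le> s"
  shows "Phi'' cv sg s \<le> cv * 2 powr ((g + 1) * (2 - sg)) * (1 + V powr (sg - 2))"
proof -
  have c: "1 \<le> 2 powr ((g + 1) * (2 - sg))"
    using g sg by (intro ge_one_powr_ge_zero) auto
  have "s powr (sg - 2) \<le> (2 powr (- g - 1) * V) powr (sg - 2)"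
    using sg s V by (intro powr_mono2') auto
  also have "\<dots> = 2 powr ((g + 1) * (2 - sg)) * V powr (sg - 2)"
    by (simp add: powr_mult powr_powr algebra_simps)
  finally have "1 + s powr (sg - 2) \<le> 2 powr ((g + 1) * (2 - sg)) * (1 + V powr (sg - 2))"
    using c by (simp add: algebra_simps)
  then show ?thesis
    unfolding Phi''_def using cv by (simp add: mult.assoc mult_left_mono)
qed

definition interior_constant :: "real \<Rightarrow> real \<Rightarrow> real \<Rightarrow> real \<Rightarrow> real" where
  "interior_constant T g sg cv
     = 2 * cv * 2 powr ((g + 1) * (2 - sg)) * g\<^sup>2 * 2 powr g * (T powr 2 + T powr sg)"

lemma graded_estimate:
  fixes al sg g T N X cv s Y :: real
  assumes al: "0 < al" "al < 1" and sg: "0 < sg" "sg < 2" and g: "1 \<le> g" and T: "0 < T"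
    and cv: "0 < cv" and N: "1 \<le> N" and X: "1 / N \<le> X" "X \<le> 1"
    and s: "2 powr (- g - 1) * (T * X powr g) \<le> s"
    and Y: "0 \<le> Y" "Y \<le> g\<^sup>2 * 2 powr g * ((T * X powr (g - 1) / N) powr (2 - al) * (T * X powr g) powr al)"
  shows "2 * Phi'' cv sg s * Y \<le> interior_constant T g sg cv * N powr (- min (g * sg) (2 - al))"
proof -
  define c where "c = cv * 2 powr ((g + 1) * (2 - sg))"
  define V where "V = T * X powr g"
  define P where "P = (T * X powr (g - 1) / N) powr (2 - al) * V powr al"
  have "0 < X"
    using X N by (smt (verit) divide_pos_pos)
  then have "0 < V"
    using T by (simp add: V_def)
  then have Phi: "Phi'' cv sg s \<le> c * (1 + V powr (sg - 2))"
    using s cv sg g unfolding V_def c_def by (intro Phi''_le_scale) auto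
  have c: "0 \<le> c"
    using cv by (simp add: c_def)
  have "2 * Phi'' cv sg s * Y \<le> 2 * (c * (1 + V powr (sg - 2))) * (g\<^sup>2 * 2 powr g * P)"
    using Phi Y c unfolding P_def V_def
    by (intro mult_mono mult_left_mono) (auto intro: order_trans[OF _ Phi] less_imp_le[OF Phi''_pos[OF cv]])
  also have "\<dots> = 2 * c * g\<^sup>2 * 2 powr g * ((1 + V powr (sg - 2)) * P)"
    by (simp only: ac_simps)
  also have "\<dots> \<le> 2 * c * g\<^sup>2 * 2 powr g * ((T powr 2 + T powr sg) * N powr (- min (g * sg) (2 - al)))"
    using graded_scale_product_le[OF al sg(1) g T N X] c unfolding P_def V_def
    by (intro mult_left_mono) auto
  finally show ?thesis
    by (simp add: interior_constant_def c_def ac_simps)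
qed

lemma graded_diag_factor_le:
  fixes al g U V h s :: real
  assumes al: "0 < al" "al < 1" and g: "1 \<le> g" and h: "0 < h" "h \<le> g * U" and s: "0 < s" "s \<le> V"
  shows "h powr (2 - al) * s powr al \<le> g\<^sup>2 * 2 powr g * (U powr (2 - al) * V powr al)"
proof -
  have "h powr (2 - al) \<le> (g * U) powr (2 - al)"
    using al h by (intro powr_mono2) auto
  also have "\<dots> = g powr (2 - al) * U powr (2 - al)"
    using g h by (simp add: powr_mult)
  also have "\<dots> \<le> g\<^sup>2 * 2 powr g * U powr (2 - al)"
  proof -
    have "g powr (2 - al) \<le> g powr 2"
      using g al by (intro powr_mono) auto
    also have "\<dots> \<le> g\<^sup>2 * 2 powr g"
      using g ge_one_powr_ge_zero[of 2 g] by (simp add: powr_numeral)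
    finally show ?thesis
      by (intro mult_right_mono) auto
  qed
  finally have "h powr (2 - al) \<le> g\<^sup>2 * 2 powr g * U powr (2 - al)" .
  moreover have "s powr al \<le> V powr al"
    using al s by (intro powr_mono2) auto
  ultimately have "h powr (2 - al) * s powr al \<le> (g\<^sup>2 * 2 powr g * U powr (2 - al)) * V powr al"
    by (rule mult_mono) simp_all
  then show ?thesis
    by (simp add: mult.assoc)
qed

lemma graded_subdiag_factor_le:
  fixes al g U V h h' s :: real
  assumes al: "0 < al" "al < 1" and g: "1 \<le> g" and U: "0 < U"
    and h: "0 < h" "h \<le> g * U" and h': "2 powr (- g) * U \<le> h'" and s: "0 < s" "s \<le> V"
  shows "h\<^sup>2 * s powr al * h' powr (- al) \<le> g\<^sup>2 * 2 powr g * (U powr (2 - al) * V powr al)"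
proof -
  have "h\<^sup>2 \<le> (g * U)\<^sup>2"
    using h by (intro power_mono) auto
  moreover have "s powr al \<le> V powr al"
    using al s by (intro powr_mono2) auto
  ultimately have hs: "h\<^sup>2 * s powr al \<le> (g * U)\<^sup>2 * V powr al"
    by (rule mult_mono) simp_all
  have "h' powr (- al) \<le> (2 powr (- g) * U) powr (- al)"
    using al h' U by (intro powr_mono2') auto
  also have "\<dots> = 2 powr (g * al) * U powr (- al)"
    by (simp add: powr_mult powr_powr)
  also have "2 powr (g * al) \<le> 2 powr g"
    using al g by (intro powr_mono) (auto simp: mult_left_le)
  finally have h': "h' powr (- al) \<le> 2 powr g * U powr (- al)"
    by (simp add: mult_right_mono)
  have "h\<^sup>2 * s powr al * h' powr (- al) \<le> (g * U)\<^sup>2 * V powr al * (2 powr g * U powr (- al))"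
    using hs h' by (rule mult_mono) simp_all
  also have "\<dots> = g\<^sup>2 * 2 powr g * ((U\<^sup>2 * U powr (- al)) * V powr al)"
    by (simp only: power_mult_distrib ac_simps)
  also have "U\<^sup>2 * U powr (- al) = U powr 2 * U powr (- al)"
    using U by (simp add: powr_numeral)
  also have "\<dots> = U powr (2 - al)"
    by (simp add: powr_add[symmetric])
  finally show ?thesis .
qed

definition first_cell_constant :: "real \<Rightarrow> real \<Rightarrow> real \<Rightarrow> real" where
  "first_cell_constant T sg cv = cv * (6 + 1 / sg) * (T powr 2 + T powr sg)"

definition graded_constant :: "real \<Rightarrow> real \<Rightarrow> real \<Rightarrow> real \<Rightarrow> real \<Rightarrow> real" where
  "graded_constant al T g sg cv = (interior_constant T g sg cv + first_cell_constant T sg cv) / (1 - al)"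

lemma graded_constant_pos:
  assumes "al < 1" "0 < sg" "0 < cv" "0 < T"
  shows "0 < graded_constant al T g sg cv"
proof -
  have "0 \<le> interior_constant T g sg cv"
    using assms by (simp add: interior_constant_def)
  moreover have "0 < first_cell_constant T sg cv"
    using assms by (simp add: first_cell_constant_def add_pos_pos)
  ultimately show ?thesis
    using assms by (simp add: graded_constant_def)
qed

lemma le_graded_constant:
  assumes "al < 1" "0 < sg" "0 < cv" "0 < T"
  shows "interior_constant T g sg cv \<le> (1 - al) * graded_constant al T g sg cv"
    and "first_cell_constant T sg cv \<le> (1 - al) * graded_constant al T g sg cv"
  using assms
  by (simp_all add: graded_constant_def interior_constant_def first_cell_constant_def)

context
  fixes al sg cv T g :: real and N :: nat
  assumes al: "0 < al" "al < 1" and sg: "0 < sg" "sg < 2" "sg \<noteq> 1" and cv: "0 < cv"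
    and T: "0 < T" and g: "1 \<le> g" and N: "2 \<le> N"
begin

lemma thalf_graded_first_powers_le:
  defines "h \<equiv> thalf (graded_mesh T g N) 1" and "r \<equiv> min (g * sg) (2 - al)"
  shows "0 < h" "h\<^sup>2 \<le> T powr 2 * real N powr (- r)" "h powr sg \<le> T powr sg * real N powr (- r)"
proof -
  have h: "h = T * (1 / real N) powr g / 2"
    using thalf_Suc[of "graded_mesh T g N" 0] by (simp add: h_def graded_mesh_def)
  moreover have "0 < T * (1 / real N) powr g"
    using T N by (intro mult_pos_pos) auto
  ultimately show "0 < h"
    by simp
  have "(1 / real N) powr g \<le> 1 / real N"
    using N g by (intro powr_le_one_le) auto
  then have "T * (1 / real N) powr g / 2 \<le> T * (1 / real N) / 2"
    using T by (intro divide_right_mono mult_left_mono) auto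
  also have "\<dots> \<le> T / real N"
    using T N by (simp add: divide_simps)
  finally have "h \<le> T / real N"
    unfolding h .
  then have "h\<^sup>2 \<le> (T / real N)\<^sup>2"
    using \<open>0 < h\<close> by (intro power_mono) auto
  also have "\<dots> = T powr 2 * real N powr (- 2)"
    using T N by (simp add: powr_minus divide_simps power2_eq_square)
  also have "\<dots> \<le> T powr 2 * real N powr (- r)"
    using N al by (intro mult_left_mono powr_mono) (auto simp: r_def)
  finally show "h\<^sup>2 \<le> T powr 2 * real N powr (- r)" .
  have "h powr sg \<le> (T * (1 / real N) powr g) powr sg"
    using sg h \<open>0 < h\<close> by (intro powr_mono2) auto
  also have "\<dots> = T powr sg * real N powr (- (g * sg))"
    using N by (simp add: powr_mult powr_powr powr_divide powr_minus divide_simps)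
  also have "\<dots> \<le> T powr sg * real N powr (- r)"
    using N by (intro mult_left_mono powr_mono) (auto simp: r_def)
  finally show "h powr sg \<le> T powr sg * real N powr (- r)" .
qed

lemma graded_first_cell_size_le:
  "cell_size cv sg (graded_mesh T g N) 1 \<le> first_cell_constant T sg cv * real N powr (- min (g * sg) (2 - al))"
proof -
  define h where "h = thalf (graded_mesh T g N) 1"
  define r where "r = min (g * sg) (2 - al)"
  note h = thalf_graded_first_powers_le[folded h_def r_def]
  have "cell_size cv sg (graded_mesh T g N) 1 \<le> cv * (2 * h\<^sup>2 + (1 / sg + 4) * h powr sg)"
    unfolding h_def using graded_mesh_strict[OF T g N] h(1)
    by (intro cell_size_first_le[OF cv sg]) (auto simp: thalf_0 strict_mesh_def h_def)
  also have "\<dots> \<le> cv * (2 * (T powr 2 * real N powr (- r)) + (1 / sg + 4) * (T powr sg * real N powr (- r)))"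
    using h(2,3) sg cv by (intro mult_left_mono add_mono) auto
  also have "\<dots> \<le> first_cell_constant T sg cv * real N powr (- r)"
    using sg cv by (simp add: first_cell_constant_def algebra_simps)
  finally show ?thesis
    unfolding r_def .
qed

lemma graded_first_cell_size_le_constant:
  "cell_size cv sg (graded_mesh T g N) 1
    \<le> graded_constant al T g sg cv * real N powr (- min (g * sg) (2 - al))"
proof -
  have "first_cell_constant T sg cv \<le> graded_constant al T g sg cv"
    using le_graded_constant(2)[OF al(2) sg(1) cv T] graded_constant_pos[OF al(2) sg(1) cv T] al by (smt (verit) mult_left_le_one_le)
  then show ?thesis
    using graded_first_cell_size_le by (smt (verit) mult_right_mono powr_ge_zero)
qed

lemma graded_ratio: "1 \<le> k \<Longrightarrow> k \<le> N \<Longrightarrow> 1 / real N \<le> real k / real N \<and> real k / real N \<le> 1"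
  using N by (simp add: divide_right_mono)

lemma graded_interior_estimate:
  assumes "2 \<le> k" "k \<le> N" and Y: "0 \<le> Y"
    "Y \<le> g\<^sup>2 * 2 powr g * ((T * (real k / real N) powr (g - 1) / N) powr (2 - al)
      * (T * (real k / real N) powr g) powr al)"
  shows "2 * Phi'' cv sg (thalf (graded_mesh T g N) (k - 1)) * Y
    \<le> (1 - al) * (graded_constant al T g sg cv * real N powr (- min (g * sg) (2 - al)))"
proof -
  have "2 * Phi'' cv sg (thalf (graded_mesh T g N) (k - 1)) * Y
      \<le> interior_constant T g sg cv * real N powr (- min (g * sg) (2 - al))"
    using graded_ratio[of k] assms N
    by (intro graded_estimate[OF al sg(1,2) g T cv _ _ _ thalf_graded_pred_ge[OF T g N \<open>2 \<le> k\<close>] Y]) auto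
  also have "\<dots> \<le> (1 - al) * graded_constant al T g sg cv * real N powr (- min (g * sg) (2 - al))"
    using le_graded_constant(1)[OF al(2) sg(1) cv T] by (rule mult_right_mono) simp
  finally show ?thesis
    by (simp add: mult.assoc)
qed

lemma graded_diag_first_le:
  "acoef al (graded_mesh T g N) 1 1 * cell_size cv sg (graded_mesh T g N) 1
    \<le> graded_constant al T g sg cv * real N powr (- min (g * sg) (2 - al))
      * omega (1 - al) (thalf (graded_mesh T g N) 1)"
proof -
  define t where "t = graded_mesh T g N"
  define M where "M = graded_constant al T g sg cv * real N powr (- min (g * sg) (2 - al))"
  have mesh: "strict_mesh t N"
    unfolding t_def by (rule graded_mesh_strict[OF T g N])
  have tau: "0 < tauhalf t 1" "tauhalf t 1 = thalf t 1"
    using tauhalf_pos[OF mesh, of 1] tauhalf_eq[of 1 t] mesh N by (auto simp: thalf_0 strict_mesh_def)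
  have "tauhalf t 1 powr (- al) * tauhalf t 1 powr al = 1"
    using tau by (simp add: powr_add[symmetric])
  then have "tauhalf t 1 powr (- al) * cell_size cv sg t 1 * tauhalf t 1 powr al = cell_size cv sg t 1"
    by (metis mult.commute mult.left_commute mult_1)
  also have "\<dots> \<le> (1 - al) * M"
    using graded_first_cell_size_le mult_right_mono[OF le_graded_constant(2)[OF al(2) sg(1) cv T], of "real N powr _"]
    unfolding t_def M_def by (smt (verit) mult.assoc powr_ge_zero)
  finally have "tauhalf t 1 powr (- al) * cell_size cv sg t 1 / Gamma (2 - al) \<le> M * omega (1 - al) (tauhalf t 1)"
    by (rule divide_Gamma_le_omega[OF al tau(1)])
  then show ?thesis
    using acoef_diag[OF mesh al, of 1] tau N unfolding t_def[symmetric] M_def[symmetric] by simp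
qed

lemma graded_diag_interior_le:
  assumes k: "2 \<le> k" "k \<le> N"
  shows "acoef al (graded_mesh T g N) k k * cell_size cv sg (graded_mesh T g N) k
    \<le> graded_constant al T g sg cv * real N powr (- min (g * sg) (2 - al))
      * omega (1 - al) (thalf (graded_mesh T g N) k)"
proof -
  define t where "t = graded_mesh T g N"
  define M where "M = graded_constant al T g sg cv * real N powr (- min (g * sg) (2 - al))"
  define P where "P = 2 * Phi'' cv sg (thalf t (k - 1))"
  have mesh: "strict_mesh t N"
    unfolding t_def by (rule graded_mesh_strict[OF T g N])
  have k1: "1 \<le> k"
    using k by simp
  have tau: "0 < tauhalf t k"
    using tauhalf_pos[OF mesh k1 k(2)] .
  have a: "acoef al t k k * cell_size cv sg t k
      = tauhalf t k powr (- al) * cell_size cv sg t k / Gamma (2 - al)"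
    using acoef_diag[OF mesh al k1 k(2)] by simp
  have "cell_size cv sg t k \<le> P * (tauhalf t k)\<^sup>2"
    unfolding P_def using thalf_pos[OF mesh, of "k - 1"] thalf_strict_mono[OF mesh, of "k - 1" k] k
    by (intro cell_size_le[OF cv sg]) auto
  then have "acoef al t k k * cell_size cv sg t k \<le> P * tauhalf t k powr (2 - al) / Gamma (2 - al)"
    using tau Gamma_two_minus_pos[OF al(2)] unfolding a
    by (simp add: divide_right_mono mult_left_mono powr_diff powr_minus power2_eq_square field_simps)
  also have "\<dots> \<le> M * omega (1 - al) (thalf t k)"
  proof (rule divide_Gamma_le_omega[OF al thalf_pos[OF mesh k1 k(2)]])
    have "tauhalf t k powr (2 - al) * thalf t k powr al
        \<le> g\<^sup>2 * 2 powr g * ((T * (real k / real N) powr (g - 1) / N) powr (2 - al)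
          * (T * (real k / real N) powr g) powr al)"
      using tau tauhalf_graded_le[OF T g N k(1)] thalf_pos[OF mesh k1 k(2)]
        thalf_graded_le_scale[OF T g N k1 order_refl]
      unfolding t_def by (intro graded_diag_factor_le[OF al g]) auto
    from graded_interior_estimate[OF k _ this]
    show "P * tauhalf t k powr (2 - al) * thalf t k powr al \<le> (1 - al) * M"
      unfolding P_def M_def t_def by (simp add: mult.assoc)
  qed
  finally show ?thesis
    unfolding t_def M_def .
qed

lemma graded_diag_le:
  "1 \<le> k \<Longrightarrow> k \<le> N \<Longrightarrow> acoef al (graded_mesh T g N) k k * cell_size cv sg (graded_mesh T g N) k
    \<le> graded_constant al T g sg cv * real N powr (- min (g * sg) (2 - al))
      * omega (1 - al) (thalf (graded_mesh T g N) k)"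
  using graded_diag_first_le graded_diag_interior_le[of k] by (cases "k = 1") auto

lemma graded_subdiag_le:
  assumes k: "2 \<le> k" "k \<le> N"
  shows "acoef al (graded_mesh T g N) (k - 1) (k - 1) * cell_size cv sg (graded_mesh T g N) k
    \<le> graded_constant al T g sg cv * real N powr (- min (g * sg) (2 - al))
      * omega (1 - al) (thalf (graded_mesh T g N) (k - 1))"
proof -
  define t where "t = graded_mesh T g N"
  define M where "M = graded_constant al T g sg cv * real N powr (- min (g * sg) (2 - al))"
  define P where "P = 2 * Phi'' cv sg (thalf t (k - 1))"
  have mesh: "strict_mesh t N"
    unfolding t_def by (rule graded_mesh_strict[OF T g N])
  have k1: "1 \<le> k - 1" "k - 1 \<le> N"
    using k by auto
  have "cell_size cv sg t k \<le> P * (tauhalf t k)\<^sup>2"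
    unfolding P_def using thalf_pos[OF mesh k1] thalf_strict_mono[OF mesh, of "k - 1" k] k
    by (intro cell_size_le[OF cv sg]) auto
  then have "cell_size cv sg t k * tauhalf t (k - 1) powr (- al) / Gamma (2 - al)
      \<le> P * (tauhalf t k)\<^sup>2 * tauhalf t (k - 1) powr (- al) / Gamma (2 - al)"
    using Gamma_two_minus_pos[OF al(2)] by (intro divide_right_mono mult_right_mono) auto
  then have "acoef al t (k - 1) (k - 1) * cell_size cv sg t k
      \<le> P * (tauhalf t k)\<^sup>2 * tauhalf t (k - 1) powr (- al) / Gamma (2 - al)"
    using acoef_diag[OF mesh al k1] by (simp add: mult.commute)
  also have "\<dots> \<le> M * omega (1 - al) (thalf t (k - 1))"
  proof (rule divide_Gamma_le_omega[OF al thalf_pos[OF mesh k1]])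
    have "0 < T * (real k / real N) powr (g - 1) / N"
      using T k by simp
    then have "(tauhalf t k)\<^sup>2 * thalf t (k - 1) powr al * tauhalf t (k - 1) powr (- al)
        \<le> g\<^sup>2 * 2 powr g * ((T * (real k / real N) powr (g - 1) / N) powr (2 - al)
          * (T * (real k / real N) powr g) powr al)"
      using tauhalf_pos[OF mesh, of k] tauhalf_graded_le[OF T g N k(1)] tauhalf_graded_pred_ge[OF T g N k]
        thalf_pos[OF mesh k1] thalf_graded_le_scale[OF T g N k1(1)] k
      unfolding t_def by (intro graded_subdiag_factor_le[OF al g]) auto
    from graded_interior_estimate[OF k _ this]
    show "P * (tauhalf t k)\<^sup>2 * tauhalf t (k - 1) powr (- al) * thalf t (k - 1) powr al \<le> (1 - al) * M"
      unfolding P_def M_def t_def by (simp add: ac_simps)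
  qed
  finally show ?thesis
    unfolding t_def M_def .
qed

end

theorem mainTheorem9:
  fixes al T g sigma cv :: real
  assumes "0 < al" and "al < 1" and "T > 0" and "g \<ge> 1" and "cv > 0"
    and "sigma \<in> {0<..<1} \<union> {1<..<2}"
  shows "\<exists>C>0. \<forall>N::nat. \<forall>v v' v'' :: real \<Rightarrow> real.
     N \<ge> 2 \<and> continuous_on {0..T} v
     \<and> (\<forall>t\<in>{0<..T}. (v has_real_derivative v' t) (at t within {0<..T})
                    \<and> (v' has_real_derivative v'' t) (at t within {0<..T}))
     \<and> continuous_on {0<..T} v''
     \<and> (\<forall>t\<in>{0<..T}. \<bar>v'' t\<bar> \<le> cv * (1 + t powr (sigma - 2)))
     \<longrightarrow> (\<forall>n\<in>{1..N}.
          (\<Sum>j=1..n. pker al (graded_mesh T g N) n j * \<bar>Rerr al (graded_mesh T g N) v j\<bar>)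
            \<le> C * real N powr (- min (g * sigma) (2 - al)))"
proof -
  note al = assms(1,2) and T = assms(3) and g = assms(4) and cv = assms(5)
  have sg: "0 < sigma" "sigma < 2" "sigma \<noteq> 1"
    using assms(6) by auto
  show ?thesis
    unfolding admissible_def[symmetric]
  proof (intro exI[of _ "9 * graded_constant al T g sigma cv"] conjI allI impI ballI)
    show "0 < 9 * graded_constant al T g sigma cv"
      using graded_constant_pos[OF al(2) sg(1) cv T] by simp
    fix N :: nat and v v' v'' :: "real \<Rightarrow> real" and n
    assume H: "2 \<le> N \<and> admissible T cv sigma v v' v''"
      and n: "n \<in> {1..N}"
    have N: "2 \<le> N" and adm: "admissible T cv sigma v v' v''"
      using H by auto
    have "1 \<le> N"
      using N by simp
    from pker_weighted_Rerr_sum_le[OF al sg cv adm graded_mesh_strict[OF T g N] this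
        eq_refl[OF graded_mesh_last[OF T g N]] graded_first_cell_size_le_constant[OF al sg cv T g N]
        graded_diag_le[OF al sg cv T g N] graded_subdiag_le[OF al sg cv T g N]]
    show "(\<Sum>j=1..n. pker al (graded_mesh T g N) n j * \<bar>Rerr al (graded_mesh T g N) v j\<bar>)
        \<le> 9 * graded_constant al T g sigma cv * real N powr (- min (g * sigma) (2 - al))"
      using n by (simp add: mult.assoc)
  qed
qed

end
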